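(* Let $G,H$ be loopless multigraphs on a finite set $V$ with $\deg_G(v)=\deg_H(v)\le2$ for all $v$, let $V_4$ be the set of vertices where this common degree is $2$, and let $M\in\mathcal{PM}(G,H)$. For $S\subseteq V_4$ we always have $\mathrm{cycles}(M^{\oplus S})\le\mathrm{cycles}(M)+|S|$, and $$\mathrm{cycles}(M^{\oplus S})=\mathrm{cycles}(M)+|S|$$ holds if and only if $S\subseteq\mathrm{gg}(M)$ and $S$ is non-crossing.
   Context: $G\cup H$ is the multigraph on $V$ with edge multiset the disjoint union of $E(G)$ and $E(H)$; each edge has two half-edges, one at each endpoint, called $G$- or $H$-half-edges by origin. $\mathcal{PM}(G,H)$ is the set of collections $M=(M_v)_{v\in V}$ where $M_v$ is a perfect matching of the half-edges at $v$ each of whose pairs consists of one $G$- and one $H$-half-edge. For a collection $N$ of perfect matchings at all vertices, $\Gamma_N$ is the multigraph on half-edges with an edge joining the two half-edges of each edge and one per matched pair; its components are cycles and $\mathrm{cycles}(N)$ is their number. For $v\in V_4$ with $M_v=\{\{g_1,h_1\},\{g_2,h_2\}\}$, $M^{\oplus v}$ agrees with $M$ except that at $v$ it uses $\{\{g_1,g_2\},\{h_1,h_2\}\}$; $M^{\oplus S}$ applies this at every $v\in S$. For a cycle $C$ of $\Gamma_M$, $C$ visits $v$ twice if all four half-edges at $v$ lie in $C$ (it passes through $v$ once via each pair of $M_v$). The matching induced at $v$ (by $M$ restricted to vertices other than $v$) pairs each half-edge $h$ at $v$ with the half-edge at $v$ reached from $h$ by traversing its edge and then alternately following matched pairs at other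 vertices and edges, until first returning to $v$. $\mathrm{gg}(C)$ is the set of $v\in V_4$ visited twice by $C$ whose induced matching contains a pair of two $G$-half-edges; $\mathrm{gg}(M)=\bigcup_C\mathrm{gg}(C)$. Drawing each cycle $C$ as a circle on which each passage through a vertex is a point, each $v$ visited twice by $C$ determines a chord joining its two passages; $S$ is non-crossing if, for every cycle $C$, the chords of the vertices of $S$ visited twice by $C$ are pairwise non-crossing (their endpoints do not interleave around the circle). *)

theory Defs
  imports Main
begin

text \<open>A loopless multigraph with edge set E (edge identifiers of type 'a) and
endpoint map: an edge a has the two ends fst (ends a) and snd (ends a).\<close>
type_synonym ('v,'a) mgraph = "'a set \<times> ('a \<Rightarrow> 'v \<times> 'v)"

definition edges :: "('v,'a) mgraph \<Rightarrow> 'a set" where "edges G = fst G"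

definition ep :: "('v,'a) mgraph \<Rightarrow> 'a \<Rightarrow> bool \<Rightarrow> 'v" where
  "ep G a s = (if s then snd (snd G a) else fst (snd G a))"

definition multigraph_on :: "'v set \<Rightarrow> ('v,'a) mgraph \<Rightarrow> bool" where
  "multigraph_on V G \<longleftrightarrow> finite (edges G) \<and> (\<forall>a\<in>edges G. \<forall>s. ep G a s \<in> V)"

definition loopless :: "('v,'a) mgraph \<Rightarrow> bool" where
  "loopless G \<longleftrightarrow> (\<forall>a\<in>edges G. ep G a True \<noteq> ep G a False)"

definition deg :: "('v,'a) mgraph \<Rightarrow> 'v \<Rightarrow> nat" where
  "deg G v = card {(a,s). a \<in> edges G \<and> ep G a s = v}"

definition V4 :: "'v set \<Rightarrow> ('v,'a) mgraph \<Rightarrow> 'v set" where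
  "V4 V G = {v\<in>V. deg G v = 2}"

text \<open>Half-edges of the union G \<union> H: (Inl a, s) is the end s of G-edge a,
(Inr b, s) the end s of H-edge b.\<close>
type_synonym ('a,'b) half = "('a + 'b) \<times> bool"

definition halves :: "('v,'a) mgraph \<Rightarrow> ('v,'b) mgraph \<Rightarrow> ('a,'b) half set" where
  "halves G H = {(Inl a, s) |a s. a \<in> edges G} \<union> {(Inr b, s) |b s. b \<in> edges H}"

definition hvtx :: "('v,'a) mgraph \<Rightarrow> ('v,'b) mgraph \<Rightarrow> ('a,'b) half \<Rightarrow> 'v" where
  "hvtx G H h = (case fst h of Inl a \<Rightarrow> ep G a (snd h) | Inr b \<Rightarrow> ep H b (snd h))"

definition hflip :: "('a,'b) half \<Rightarrow> ('a,'b) half" where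
  "hflip h = (fst h, \<not> snd h)"

definition isGh :: "('a,'b) half \<Rightarrow> bool" where
  "isGh h = isl (fst h)"

text \<open>A collection N of perfect matchings of the half-edges at every vertex,
encoded as a fixed-point-free involution on half-edges preserving the vertex
(identity outside the half-edges).\<close>
definition is_pmc :: "('v,'a) mgraph \<Rightarrow> ('v,'b) mgraph \<Rightarrow> (('a,'b) half \<Rightarrow> ('a,'b) half) \<Rightarrow> bool" where
  "is_pmc G H N \<longleftrightarrow>
     (\<forall>h\<in>halves G H. N h \<in> halves G H \<and> N h \<noteq> h \<and> N (N h) = h \<and> hvtx G H (N h) = hvtx G H h)
   \<and> (\<forall>h. h \<notin> halves G H \<longrightarrow> N h = h)"

definition PM :: "('v,'a) mgraph \<Rightarrow> ('v,'b) mgraph \<Rightarrow> (('a,'b) half \<Rightarrow> ('a,'b) half) set" where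
  "PM G H = {N. is_pmc G H N \<and> (\<forall>h\<in>halves G H. isGh (N h) \<noteq> isGh h)}"

definition gamma_rel :: "('v,'a) mgraph \<Rightarrow> ('v,'b) mgraph \<Rightarrow> (('a,'b) half \<Rightarrow> ('a,'b) half)
   \<Rightarrow> (('a,'b) half \<times> ('a,'b) half) set" where
  "gamma_rel G H N = {(h, hflip h) |h. h \<in> halves G H} \<union> {(h, N h) |h. h \<in> halves G H}"

definition conn :: "('v,'a) mgraph \<Rightarrow> ('v,'b) mgraph \<Rightarrow> (('a,'b) half \<Rightarrow> ('a,'b) half)
   \<Rightarrow> (('a,'b) half \<times> ('a,'b) half) set" where
  "conn G H N = (gamma_rel G H N \<union> (gamma_rel G H N)\<inverse>)\<^sup>*"

definition cycles :: "('v,'a) mgraph \<Rightarrow> ('v,'b) mgraph \<Rightarrow> (('a,'b) half \<Rightarrow> ('a,'b) half) \<Rightarrow> nat" where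
  "cycles G H N = card (halves G H // conn G H N)"

text \<open>M^{\<oplus>S}: at each v in S, pair the two G-half-edges and the two H-half-edges.\<close>
definition flipS :: "('v,'a) mgraph \<Rightarrow> ('v,'b) mgraph \<Rightarrow> (('a,'b) half \<Rightarrow> ('a,'b) half)
   \<Rightarrow> 'v set \<Rightarrow> ('a,'b) half \<Rightarrow> ('a,'b) half" where
  "flipS G H M S h = (if h \<in> halves G H \<and> hvtx G H h \<in> S
      then (THE h'. h' \<in> halves G H \<and> hvtx G H h' = hvtx G H h \<and> h' \<noteq> h \<and> isGh h' = isGh h)
      else M h)"

text \<open>Traversal step: from a half-edge at which we depart, cross its edge and
leave the next vertex via the matched partner.\<close>
definition Tstep :: "(('a,'b) half \<Rightarrow> ('a,'b) half) \<Rightarrow> ('a,'b) half \<Rightarrow> ('a,'b) half" where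
  "Tstep M h = M (hflip h)"

text \<open>C visits v twice: all half-edges at v lie in one cycle.\<close>
definition visits_twice :: "('v,'a) mgraph \<Rightarrow> ('v,'b) mgraph \<Rightarrow> (('a,'b) half \<Rightarrow> ('a,'b) half) \<Rightarrow> 'v \<Rightarrow> bool" where
  "visits_twice G H M v \<longleftrightarrow>
     (\<forall>h\<in>halves G H. \<forall>h'\<in>halves G H. hvtx G H h = v \<and> hvtx G H h' = v \<longrightarrow> (h, h') \<in> conn G H M)"

text \<open>Matching induced at v: from h, traverse its edge, then alternately matched
pairs (at vertices other than v) and edges, until first returning to v.\<close>
definition induced :: "('v,'a) mgraph \<Rightarrow> ('v,'b) mgraph \<Rightarrow> (('a,'b) half \<Rightarrow> ('a,'b) half)
   \<Rightarrow> 'v \<Rightarrow> ('a,'b) half \<Rightarrow> ('a,'b) half" where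
  "induced G H M v h =
     hflip ((Tstep M ^^ (LEAST k. hvtx G H (hflip ((Tstep M ^^ k) h)) = v)) h)"

definition gg :: "'v set \<Rightarrow> ('v,'a) mgraph \<Rightarrow> ('v,'b) mgraph \<Rightarrow> (('a,'b) half \<Rightarrow> ('a,'b) half) \<Rightarrow> 'v set" where
  "gg V G H M = {v \<in> V4 V G. visits_twice G H M v \<and>
     (\<exists>h\<in>halves G H. hvtx G H h = v \<and> isGh h \<and> isGh (induced G H M v h))}"

text \<open>Passages of a cycle, in cyclic order, are the departure half-edges
x, Tstep M x, Tstep M (Tstep M x), ... (one period). The chords of u and w cross
iff their passages interleave: u, w, u, w within one period starting at a passage of u.\<close>
definition crosses :: "('v,'a) mgraph \<Rightarrow> ('v,'b) mgraph \<Rightarrow> (('a,'b) half \<Rightarrow> ('a,'b) half) \<Rightarrow> 'v \<Rightarrow> 'v \<Rightarrow> bool" where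
  "crosses G H M u w \<longleftrightarrow> (\<exists>x\<in>halves G H. \<exists>k1 k2 k3::nat.
      hvtx G H x = u \<and> 0 < k1 \<and> k1 < k2 \<and> k2 < k3 \<and>
      hvtx G H ((Tstep M ^^ k1) x) = w \<and> hvtx G H ((Tstep M ^^ k2) x) = u \<and>
      hvtx G H ((Tstep M ^^ k3) x) = w \<and>
      (\<forall>j. 0 < j \<and> j \<le> k3 \<longrightarrow> (Tstep M ^^ j) x \<noteq> x))"

definition non_crossing :: "('v,'a) mgraph \<Rightarrow> ('v,'b) mgraph \<Rightarrow> (('a,'b) half \<Rightarrow> ('a,'b) half) \<Rightarrow> 'v set \<Rightarrow> bool" where
  "non_crossing G H M S \<longleftrightarrow> (\<forall>u\<in>S. \<forall>w\<in>S. u \<noteq> w \<longrightarrow> \<not> crosses G H M u w)"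

end

theory Submission
  imports Defs "HOL-Combinatorics.Transposition"
begin

text \<open>
  Let \<open>T\<^sub>N h = N (hflip h)\<close>: cross the edge of \<open>h\<close>, then leave the next vertex through the
  partner under \<open>N\<close>. \<open>T\<^sub>N\<close> permutes the half-edges, and each cycle of \<open>\<Gamma>\<^sub>N\<close> carries exactly two
  \<open>T\<^sub>N\<close>-orbits, one per direction of traversal; so \<open>2 cycles(N)\<close> is the number of orbits of \<open>T\<^sub>N\<close>.

  Switching \<open>M\<close> to \<open>M\<^sup>\<oplus>\<^sup>S\<close> composes \<open>T\<^sub>M\<close> with \<open>2|S|\<close> disjoint transpositions, one pair
  \<open>(g, M (twin g))\<close> for every \<open>G\<close>-half-edge \<open>g\<close> at a vertex of \<open>S\<close>. Composing a permutation with
  the transposition of two points splits their orbit in two if they share an orbit, and merges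
  two orbits otherwise. By induction over the transpositions the number of orbits grows by at
  most their number, with equality iff each pair lies on one orbit and the chords of distinct
  pairs do not cross. It remains to see that \<open>g\<close> and \<open>M (twin g)\<close> share an orbit iff the vertex of
  \<open>g\<close> lies in \<open>gg(M)\<close>, and that crossing of these chords is crossing in the sense of the
  definition of non-crossing sets.
\<close>

section \<open>Counting equivalence classes\<close>

lemma card_quotient_antimono:
  assumes "finite X" "equiv X E" "equiv X E'" "E \<subseteq> E'"
  shows "card (X // E') \<le> card (X // E)"
proof -
  have "E' `` (E `` {x}) = E' `` {x}" if "x \<in> X" for x
  proof
    show "E' `` {x} \<subseteq> E' `` (E `` {x})"
      using assms(2) that by (auto simp: equiv_def refl_on_def)
    show "E' `` (E `` {x}) \<subseteq> E' `` {x}"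
      using assms(3,4) unfolding equiv_def trans_def by blast
  qed
  then have "X // E' = Image E' ` (X // E)"
    unfolding quotient_def by auto
  moreover have "finite (X // E)"
    using assms(1,2) by (intro finite_quotient) (auto simp: equiv_def)
  ultimately show ?thesis by (simp add: card_image_le)
qed

lemma card_quotient_refinement:
  assumes "finite X" "equiv X E" "equiv X E'" "E \<subseteq> E'"
    and split: "\<And>K. K \<in> X // E' \<Longrightarrow> card {D \<in> X // E. D \<subseteq> K} = n"
  shows "card (X // E) = n * card (X // E')"
proof -
  let ?parts = "\<lambda>K. {D \<in> X // E. D \<subseteq> K}"
  have E_class_in_E'_class: "E `` {x} \<subseteq> E' `` {x}" for x
    using assms(4) by blast
  have "X // E = (\<Union>K\<in>X // E'. ?parts K)"
  proof (intro equalityI subsetI)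
    fix D assume "D \<in> X // E"
    then obtain x where "x \<in> X" "D = E `` {x}" by (auto elim: quotientE)
    then show "D \<in> (\<Union>K\<in>X // E'. ?parts K)"
      using E_class_in_E'_class \<open>D \<in> X // E\<close> quotientI[of x X E'] by blast
  qed auto
  moreover have "?parts K \<inter> ?parts K' = {}" if "K \<in> X // E'" "K' \<in> X // E'" "K \<noteq> K'" for K K'
    using quotient_disj[OF assms(3) that(1,2)] that(3) in_quotient_imp_non_empty[OF assms(2)] by blast
  moreover have "finite (X // E')" "finite (X // E)"
    using assms(1-3) by (auto intro!: finite_quotient simp: equiv_def)
  ultimately have "card (X // E) = (\<Sum>K\<in>X // E'. card (?parts K))"
    using card_UN_disjoint[of "X // E'" ?parts] by simp
  then show ?thesis using split by simp
qed

lemma card_replace_by_two: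
  assumes "finite A" "C \<in> A" "C1 \<notin> A" "C2 \<notin> A" "C1 \<noteq> C2"
  shows "card (insert C1 (insert C2 (A - {C}))) = card A + 1"
proof -
  have "card (A - {C}) + 1 = card A"
    using card_Suc_Diff1[OF assms(1,2)] by simp
  then show ?thesis using assms by simp
qed

section \<open>Orbits of a map permuting a finite set\<close>

definition reaches :: "'a set \<Rightarrow> ('a \<Rightarrow> 'a) \<Rightarrow> 'a \<Rightarrow> 'a \<Rightarrow> bool" where
  "reaches X P x y \<longleftrightarrow> x \<in> X \<and> (\<exists>k. (P ^^ k) x = y)"

definition period :: "('a \<Rightarrow> 'a) \<Rightarrow> 'a \<Rightarrow> nat" where
  "period P x = (LEAST n. 0 < n \<and> (P ^^ n) x = x)"

definition orbit_dist :: "('a \<Rightarrow> 'a) \<Rightarrow> 'a \<Rightarrow> 'a \<Rightarrow> nat" where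
  "orbit_dist P x y = (LEAST k. (P ^^ k) x = y)"

definition orbit_rel :: "'a set \<Rightarrow> ('a \<Rightarrow> 'a) \<Rightarrow> 'a rel" where
  "orbit_rel X P = {(x, y). reaches X P x y}"

definition orbit_count :: "'a set \<Rightarrow> ('a \<Rightarrow> 'a) \<Rightarrow> nat" where
  "orbit_count X P = card (X // orbit_rel X P)"

lemma orbit_rel_Image: "orbit_rel X P `` {x} = {y. reaches X P x y}"
  by (simp add: orbit_rel_def)

locale finite_perm =
  fixes X :: "'a set" and P :: "'a \<Rightarrow> 'a"
  assumes finite_X: "finite X"
    and maps_to: "x \<in> X \<Longrightarrow> P x \<in> X"
    and inj_on_X: "inj_on P X"
begin

lemma funpow_in: "x \<in> X \<Longrightarrow> (P ^^ k) x \<in> X"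
  by (induction k) (auto intro: maps_to)

lemma inj_on_funpow: "inj_on (P ^^ k) X"
proof (induction k)
  case (Suc k)
  have "inj_on (P \<circ> P ^^ k) X"
    using Suc inj_on_X funpow_in by (intro comp_inj_on) (auto intro: inj_on_subset)
  then show ?case by (simp add: comp_def)
qed simp

lemma funpow_eq_imp_return:
  assumes "x \<in> X" "i \<le> j" "(P ^^ i) x = (P ^^ j) x"
  shows "(P ^^ (j - i)) x = x"
proof -
  have "(P ^^ i) ((P ^^ (j - i)) x) = (P ^^ i) x"
    using assms(2,3) by (metis comp_apply funpow_add le_add_diff_inverse)
  then show ?thesis
    using inj_on_funpow[of i] funpow_in assms(1) by (auto simp: inj_on_def)
qed

lemma funpow_returns: assumes "x \<in> X" shows "\<exists>n>0. (P ^^ n) x = x"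
proof -
  let ?f = "\<lambda>k. (P ^^ k) x"
  have "?f ` {0..card X} \<subseteq> X" using funpow_in assms by auto
  then have "card (?f ` {0..card X}) \<le> card X" using finite_X by (simp add: card_mono)
  then have "\<not> inj_on ?f {0..card X}" using card_image[of ?f "{0..card X}"] by auto
  then obtain i j where "i < j" "?f i = ?f j"
    by (auto simp: inj_on_def) (metis linorder_neqE_nat)
  then show ?thesis
    using funpow_eq_imp_return[OF assms, of i j] by (intro exI[of _ "j - i"]) auto
qed

lemma period_pos: "x \<in> X \<Longrightarrow> 0 < period P x"
  unfolding period_def using funpow_returns by (metis (mono_tags, lifting) LeastI)

lemma funpow_period: "x \<in> X \<Longrightarrow> (P ^^ period P x) x = x"
  unfolding period_def using funpow_returns by (metis (mono_tags, lifting) LeastI)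

lemma funpow_neq_below_period: "0 < j \<Longrightarrow> j < period P x \<Longrightarrow> (P ^^ j) x \<noteq> x"
  unfolding period_def using not_less_Least by blast

lemma funpow_mod_period: "x \<in> X \<Longrightarrow> (P ^^ (k mod period P x)) x = (P ^^ k) x"
  using funpow_mod_eq funpow_period by metis

lemma funpow_inj_below_period:
  assumes "x \<in> X" "i < period P x" "j < period P x" "(P ^^ i) x = (P ^^ j) x"
  shows "i = j"
proof (rule ccontr)
  have *: False if "i' < j'" "j' < period P x" "(P ^^ i') x = (P ^^ j') x" for i' j'
    using funpow_eq_imp_return[OF assms(1), of i' j'] funpow_neq_below_period[of "j' - i'" x] that
    by auto
  assume "i \<noteq> j"
  then show False using *[of i j] *[of j i] assms by (metis linorder_neqE_nat)
qed

lemma reaches_in: "reaches X P x y \<Longrightarrow> x \<in> X \<and> y \<in> X"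
  unfolding reaches_def using funpow_in by auto

lemma reaches_refl: "x \<in> X \<Longrightarrow> reaches X P x x"
  unfolding reaches_def by (auto intro: exI[of _ 0])

lemma reaches_funpow: "x \<in> X \<Longrightarrow> reaches X P x ((P ^^ k) x)"
  unfolding reaches_def by auto

lemma reaches_trans: "reaches X P x y \<Longrightarrow> reaches X P y z \<Longrightarrow> reaches X P x z"
  unfolding reaches_def by (metis comp_apply funpow_add)

lemma reaches_sym: assumes "reaches X P x y" shows "reaches X P y x"
proof -
  obtain k where k: "(P ^^ k) x = y" and x: "x \<in> X" using assms unfolding reaches_def by auto
  let ?r = "k mod period P x"
  have "?r < period P x" using period_pos[OF x] by simp
  moreover have "y = (P ^^ ?r) x" using k funpow_mod_period[OF x] by simp
  ultimately have "(P ^^ (period P x - ?r)) y = (P ^^ period P x) x"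
    by (metis comp_apply funpow_add le_add_diff_inverse2 less_imp_le)
  then show ?thesis using funpow_period[OF x] reaches_in[OF assms] unfolding reaches_def by metis
qed

lemma reaches_commute: "reaches X P x y \<Longrightarrow> reaches X P x z \<longleftrightarrow> reaches X P y z"
  using reaches_sym reaches_trans by blast

lemma orbit_rel_Image_eq: "reaches X P x y \<Longrightarrow> orbit_rel X P `` {y} = orbit_rel X P `` {x}"
  using reaches_commute by (auto simp: orbit_rel_Image)

lemma funpow_orbit_dist: "reaches X P x y \<Longrightarrow> (P ^^ orbit_dist P x y) x = y"
  unfolding reaches_def orbit_dist_def by (auto intro: LeastI)

lemma orbit_dist_less_period: assumes "reaches X P x y" shows "orbit_dist P x y < period P x"
proof -
  obtain k where k: "(P ^^ k) x = y" and x: "x \<in> X" using assms unfolding reaches_def by auto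
  have "(P ^^ (k mod period P x)) x = y" using k funpow_mod_period[OF x] by simp
  then have "orbit_dist P x y \<le> k mod period P x" unfolding orbit_dist_def by (rule Least_le)
  then show ?thesis using period_pos[OF x] by (meson mod_less_divisor order_le_less_trans)
qed

lemma orbit_dist_unique: "x \<in> X \<Longrightarrow> k < period P x \<Longrightarrow> (P ^^ k) x = y \<Longrightarrow> orbit_dist P x y = k"
  using funpow_orbit_dist orbit_dist_less_period funpow_inj_below_period reaches_def by metis

lemma orbit_dist_self: "x \<in> X \<Longrightarrow> orbit_dist P x x = 0"
  using orbit_dist_unique[of x 0 x] period_pos by simp

lemma orbit_dist_pos: "reaches X P x y \<Longrightarrow> y \<noteq> x \<Longrightarrow> 0 < orbit_dist P x y"
  using funpow_orbit_dist by (metis funpow_0 neq0_conv)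

lemma orbit_dist_inj:
  "reaches X P x y \<Longrightarrow> reaches X P x z \<Longrightarrow> orbit_dist P x y = orbit_dist P x z \<Longrightarrow> y = z"
  using funpow_orbit_dist by metis

lemma period_reaches: assumes "reaches X P x y" shows "period P y = period P x"
proof -
  have le: "period P y \<le> period P x" if c: "reaches X P x y" for x y
  proof -
    obtain k where k: "(P ^^ k) x = y" and x: "x \<in> X" using c unfolding reaches_def by auto
    have "(P ^^ period P x) y = (P ^^ k) ((P ^^ period P x) x)"
      using k by (metis add.commute comp_apply funpow_add)
    then have "(P ^^ period P x) y = y" using funpow_period[OF x] k by simp
    then show ?thesis
      using funpow_neq_below_period[of "period P x" y] period_pos[OF x] by (meson not_less)
  qed
  show ?thesis using le[OF assms] le[OF reaches_sym[OF assms]] by simp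
qed

lemma orbit_dist_shift:
  assumes "reaches X P a y" "reaches X P a z"
  shows "orbit_dist P y z = (orbit_dist P a z + period P a - orbit_dist P a y) mod period P a"
proof -
  let ?n = "period P a" and ?py = "orbit_dist P a y" and ?pz = "orbit_dist P a z"
  let ?k = "(?pz + ?n - ?py) mod ?n"
  have a: "a \<in> X" using reaches_in[OF assms(1)] by simp
  have py: "?py < ?n" "(P ^^ ?py) a = y" using assms(1) orbit_dist_less_period funpow_orbit_dist by auto
  have pz: "?pz < ?n" "(P ^^ ?pz) a = z" using assms(2) orbit_dist_less_period funpow_orbit_dist by auto
  have "(?k + ?py) mod ?n = ?pz"
    using py(1) pz(1) by (metis add.commute le_add_diff_inverse2 less_imp_le mod_add_left_eq
        mod_add_self2 mod_less trans_less_add1)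
  then have "(P ^^ ?k) y = z"
    using funpow_mod_period[OF a, of "?k + ?py"] py(2) pz(2) by (simp add: funpow_add)
  moreover have "period P y = ?n" using period_reaches[OF assms(1)] .
  ultimately show ?thesis
    using orbit_dist_unique[of y ?k z] period_pos[OF a] reaches_in[OF assms(1)] by simp
qed

lemma equiv_orbit_rel: "equiv X (orbit_rel X P)"
proof (rule equivI)
  show "orbit_rel X P \<subseteq> X \<times> X" unfolding orbit_rel_def using reaches_in by auto
  show "refl_on X (orbit_rel X P)" unfolding refl_on_def orbit_rel_def using reaches_refl by auto
  show "sym (orbit_rel X P)" unfolding sym_def orbit_rel_def using reaches_sym by auto
  show "trans (orbit_rel X P)" unfolding trans_def orbit_rel_def using reaches_trans by blast
qed

lemma finite_orbit_quotient: "finite (X // orbit_rel X P)"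
  using finite_X equiv_orbit_rel by (intro finite_quotient) (auto simp: equiv_def)

end

section \<open>Arithmetic of positions on a cycle\<close>

text \<open>\<open>(x + n - p) mod n\<close> is the position of \<open>x\<close> on a cycle of length \<open>n\<close>, counted from \<open>p\<close>.\<close>

lemma cyclic_position: "(p::nat) < n \<Longrightarrow> x < n \<Longrightarrow> (x + n - p) mod n = (if p \<le> x then x - p else x + n - p)"
proof (cases "p \<le> x")
  case True
  assume "x < n"
  then have "(x - p + n) mod n = x - p" by simp
  then show ?thesis using True by (simp add: add.commute)
qed simp

lemma cyclic_order_restrict: "(c::nat) < m \<Longrightarrow> d < m \<Longrightarrow> e < m \<Longrightarrow> m \<le> n \<Longrightarrow>
  ((e + m - c) mod m < (d + m - c) mod m) \<longleftrightarrow> ((e + n - c) mod n < (d + n - c) mod n)"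
  by (simp add: cyclic_position) arith

lemma cyclic_order_same_arc: "(c::nat) < m \<Longrightarrow> d < m \<Longrightarrow> m \<le> e \<Longrightarrow> e < n \<Longrightarrow> m \<le> f \<Longrightarrow> f < n \<Longrightarrow>
  ((e + n - c) mod n < (d + n - c) mod n) \<longleftrightarrow> ((f + n - c) mod n < (d + n - c) mod n)"
  by (simp add: cyclic_position) arith

lemma cyclic_order_interleave: "(m::nat) < n \<Longrightarrow> c < n \<Longrightarrow> d < n \<Longrightarrow> 0 < m \<Longrightarrow> 0 < c \<Longrightarrow> 0 < d \<Longrightarrow>
  m \<noteq> c \<Longrightarrow> m \<noteq> d \<Longrightarrow> c \<noteq> d \<Longrightarrow>
  ((c < m) \<noteq> (d < m)) \<longleftrightarrow>
  ((n - c < (d + n - c) mod n) \<noteq> ((m + n - c) mod n < (d + n - c) mod n))"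
  by (simp add: cyclic_position) arith

lemma cyclic_order_reverse: "(m::nat) < n \<Longrightarrow> 0 < m \<Longrightarrow> y < n \<Longrightarrow>
  ((y + n - m) mod n < n - m) \<longleftrightarrow> \<not> y < m"
  by (simp add: cyclic_position) arith

section \<open>Composing with a transposition\<close>

lemma funpow_transpose_comp_before:
  fixes P :: "'a \<Rightarrow> 'a"
  assumes "\<forall>j. 0 < j \<and> j < k \<longrightarrow> (P ^^ j) x \<noteq> a \<and> (P ^^ j) x \<noteq> b" "j < k"
  shows "((transpose a b \<circ> P) ^^ j) x = (P ^^ j) x"
  using assms(2)
proof (induction j)
  case (Suc j)
  have "((transpose a b \<circ> P) ^^ Suc j) x = transpose a b (P (((transpose a b \<circ> P) ^^ j) x))"
    by simp
  also have "\<dots> = transpose a b ((P ^^ Suc j) x)" using Suc by (simp add: comp_def)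
  also have "\<dots> = (P ^^ Suc j) x" using assms(1) Suc.prems by (intro transpose_apply_other) auto
  finally show ?case .
qed simp

lemma funpow_transpose_comp_at:
  fixes P :: "'a \<Rightarrow> 'a"
  assumes "\<forall>j. 0 < j \<and> j < k \<longrightarrow> (P ^^ j) x \<noteq> a \<and> (P ^^ j) x \<noteq> b" "0 < k"
  shows "((transpose a b \<circ> P) ^^ k) x = transpose a b ((P ^^ k) x)"
proof -
  obtain j where k: "k = Suc j" using assms(2) by (cases k) auto
  have "((transpose a b \<circ> P) ^^ Suc j) x = transpose a b (P (((transpose a b \<circ> P) ^^ j) x))"
    by simp
  then show ?thesis using funpow_transpose_comp_before[OF assms(1), of j] k by simp
qed

lemma funpow_transpose_comp_avoiding:
  fixes P :: "'a \<Rightarrow> 'a"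
  assumes "\<forall>j. 0 < j \<longrightarrow> (P ^^ j) x \<noteq> a \<and> (P ^^ j) x \<noteq> b"
  shows "((transpose a b \<circ> P) ^^ j) x = (P ^^ j) x"
  using funpow_transpose_comp_before[of "Suc j" P x a b j] assms by auto

context finite_perm
begin

lemma finite_perm_transpose_comp:
  assumes "a \<in> X" "b \<in> X" shows "finite_perm X (transpose a b \<circ> P)"
proof
  show "inj_on (transpose a b \<circ> P) X"
    using inj_on_X maps_to by (intro comp_inj_on) (auto intro: inj_on_subset)
qed (use finite_X maps_to assms in \<open>auto simp: transpose_def\<close>)

lemma reaches_transpose_comp_apart:
  assumes a: "a \<in> X" and b: "b \<in> X" and apart: "\<not> reaches X P a b"
  shows "reaches X (transpose a b \<circ> P) a b"
proof -
  have avoid: "\<forall>j. 0 < j \<and> j < period P a \<longrightarrow> (P ^^ j) a \<noteq> a \<and> (P ^^ j) a \<noteq> b"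
    using funpow_neq_below_period apart reaches_funpow[OF a] by metis
  have "((transpose a b \<circ> P) ^^ period P a) a = b"
    using funpow_transpose_comp_at[OF avoid period_pos[OF a]] funpow_period[OF a] by simp
  then show ?thesis unfolding reaches_def using a by metis
qed

lemma orbit_count_transpose_merge:
  assumes a: "a \<in> X" and b: "b \<in> X" and apart: "\<not> reaches X P a b"
  shows "orbit_count X (transpose a b \<circ> P) \<le> orbit_count X P"
proof -
  let ?Q = "transpose a b \<circ> P"
  interpret Q: finite_perm X ?Q using finite_perm_transpose_comp[OF a b] .
  have ab: "reaches X ?Q a b" using reaches_transpose_comp_apart[OF a b apart] .
  have ba: "reaches X ?Q b a"
    using reaches_transpose_comp_apart[OF b a] apart reaches_sym transpose_commute by metis
  have step: "reaches X ?Q w (P w)" if w: "w \<in> X" for w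
  proof -
    have "reaches X ?Q w (?Q w)" using Q.reaches_funpow[OF w, of 1] by simp
    moreover have "reaches X ?Q (?Q w) (P w)"
      using ab ba Q.reaches_refl[OF maps_to[OF w]] by (auto simp: transpose_def)
    ultimately show ?thesis using Q.reaches_trans by blast
  qed
  have "reaches X ?Q x ((P ^^ k) x)" if x: "x \<in> X" for x k
  proof (induction k)
    case (Suc k)
    then show ?case using Q.reaches_trans[OF Suc step[OF funpow_in[OF x, of k]]] by (simp add: comp_def)
  qed (use Q.reaches_refl[OF x] in \<open>simp add: comp_def\<close>)
  then have "orbit_rel X P \<subseteq> orbit_rel X ?Q" unfolding orbit_rel_def reaches_def by auto
  then show ?thesis unfolding orbit_count_def
    using card_quotient_antimono[OF finite_X equiv_orbit_rel Q.equiv_orbit_rel] by simp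
qed

end

text \<open>Transposing two points \<open>a \<noteq> b\<close> of one orbit cuts it into the arc from \<open>a\<close> up to
  (excluding) \<open>b\<close> and the arc from \<open>b\<close> up to \<open>a\<close>.\<close>

locale orbit_split = finite_perm +
  fixes a b
  assumes reaches_ab: "reaches X P a b" and a_neq_b: "a \<noteq> b"
begin

abbreviation "Q \<equiv> transpose a b \<circ> P"

lemma a_in: "a \<in> X" and b_in: "b \<in> X"
  using reaches_in[OF reaches_ab] by auto

sublocale Q: finite_perm X Q
  using finite_perm_transpose_comp[OF a_in b_in] .

lemma orbit_split_swap: "orbit_split X P b a"
  by unfold_locales (use reaches_sym[OF reaches_ab] a_neq_b in auto)

lemma orbit_dist_ab_pos: "0 < orbit_dist P a b"
  using orbit_dist_pos[OF reaches_ab] a_neq_b by simp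

lemma orbit_dist_ab_less: "orbit_dist P a b < period P a"
  using orbit_dist_less_period[OF reaches_ab] .

lemma avoid_before_b: "\<forall>j. 0 < j \<and> j < orbit_dist P a b \<longrightarrow> (P ^^ j) a \<noteq> a \<and> (P ^^ j) a \<noteq> b"
proof (intro allI impI)
  fix j assume j: "0 < j \<and> j < orbit_dist P a b"
  then have "(P ^^ j) a \<noteq> a" using funpow_neq_below_period orbit_dist_ab_less by simp
  moreover have "(P ^^ j) a \<noteq> b" using j unfolding orbit_dist_def using not_less_Least by blast
  ultimately show "(P ^^ j) a \<noteq> a \<and> (P ^^ j) a \<noteq> b" ..
qed

lemma funpow_Q_before_b: "j < orbit_dist P a b \<Longrightarrow> (Q ^^ j) a = (P ^^ j) a"
  using funpow_transpose_comp_before[OF avoid_before_b] .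

lemma funpow_Q_at_b: "(Q ^^ orbit_dist P a b) a = a"
  using funpow_transpose_comp_at[OF avoid_before_b orbit_dist_ab_pos] funpow_orbit_dist[OF reaches_ab]
  by simp

lemma period_Q_a: "period Q a = orbit_dist P a b"
  unfolding period_def
proof (rule Least_equality)
  show "0 < orbit_dist P a b \<and> (Q ^^ orbit_dist P a b) a = a"
    using orbit_dist_ab_pos funpow_Q_at_b by simp
  show "orbit_dist P a b \<le> y" if y: "0 < y \<and> (Q ^^ y) a = a" for y
  proof (rule ccontr)
    assume "\<not> orbit_dist P a b \<le> y"
    then have "(P ^^ y) a = a" using funpow_Q_before_b[of y] y by simp
    then show False using avoid_before_b y \<open>\<not> orbit_dist P a b \<le> y\<close> by auto
  qed
qed

lemma reaches_Q_a_iff: "reaches X Q a y \<longleftrightarrow> reaches X P a y \<and> orbit_dist P a y < orbit_dist P a b"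
proof
  assume "reaches X Q a y"
  then obtain k where k: "(Q ^^ k) a = y" unfolding reaches_def by auto
  let ?r = "k mod orbit_dist P a b"
  have r: "?r < orbit_dist P a b" using orbit_dist_ab_pos by simp
  have "(Q ^^ ?r) a = y" using Q.funpow_mod_period[OF a_in, of k] k period_Q_a by simp
  then have y: "(P ^^ ?r) a = y" using funpow_Q_before_b[OF r] by simp
  then have "reaches X P a y" using reaches_funpow[OF a_in] by metis
  moreover have "orbit_dist P a y = ?r"
    using orbit_dist_unique[OF a_in _ y] r orbit_dist_ab_less by simp
  ultimately show "reaches X P a y \<and> orbit_dist P a y < orbit_dist P a b" using r by simp
next
  assume "reaches X P a y \<and> orbit_dist P a y < orbit_dist P a b"
  then have "(Q ^^ orbit_dist P a y) a = y" using funpow_Q_before_b funpow_orbit_dist by metis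
  then show "reaches X Q a y" using Q.reaches_funpow[OF a_in] by metis
qed

lemma orbit_dist_Q_a:
  "reaches X P a y \<Longrightarrow> orbit_dist P a y < orbit_dist P a b \<Longrightarrow> orbit_dist Q a y = orbit_dist P a y"
  using Q.orbit_dist_unique[OF a_in] period_Q_a funpow_Q_before_b funpow_orbit_dist by metis

lemma funpow_Q_outside:
  assumes "x \<in> X" "\<not> reaches X P a x" shows "(Q ^^ j) x = (P ^^ j) x"
proof -
  have "\<not> reaches X P x a \<and> \<not> reaches X P x b"
    using assms reaches_ab reaches_sym reaches_trans by blast
  then have "\<forall>j. 0 < j \<longrightarrow> (P ^^ j) x \<noteq> a \<and> (P ^^ j) x \<noteq> b"
    using reaches_funpow[OF assms(1)] by metis
  then show ?thesis by (rule funpow_transpose_comp_avoiding)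
qed

lemma reaches_Q_outside:
  "x \<in> X \<Longrightarrow> \<not> reaches X P a x \<Longrightarrow> reaches X Q x y \<longleftrightarrow> reaches X P x y"
  using funpow_Q_outside unfolding reaches_def by simp

lemma orbit_dist_Q_outside:
  "x \<in> X \<Longrightarrow> \<not> reaches X P a x \<Longrightarrow> orbit_dist Q x y = orbit_dist P x y"
  using funpow_Q_outside unfolding orbit_dist_def by simp

lemma orbit_dist_ba: "orbit_dist P b a = period P a - orbit_dist P a b"
  using orbit_dist_shift[OF reaches_ab reaches_refl[OF a_in]] orbit_dist_self[OF a_in]
    orbit_dist_ab_pos orbit_dist_ab_less by simp

lemma orbit_dist_from_b_less_iff:
  assumes "reaches X P a y"
  shows "orbit_dist P b y < orbit_dist P b a \<longleftrightarrow> \<not> orbit_dist P a y < orbit_dist P a b"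
  using orbit_dist_shift[OF reaches_ab assms] orbit_dist_less_period[OF assms] orbit_dist_ba
    cyclic_order_reverse[OF orbit_dist_ab_less orbit_dist_ab_pos] by simp

lemma reaches_Q_b_iff: "reaches X Q b y \<longleftrightarrow> reaches X P b y \<and> orbit_dist P b y < orbit_dist P b a"
  using orbit_split.reaches_Q_a_iff[OF orbit_split_swap] by (simp add: transpose_commute)

lemma reaches_Q_iff:
  assumes "reaches X P a y"
  shows "reaches X Q y z \<longleftrightarrow>
    reaches X P a z \<and> (orbit_dist P a y < orbit_dist P a b \<longleftrightarrow> orbit_dist P a z < orbit_dist P a b)"
proof (cases "orbit_dist P a y < orbit_dist P a b")
  case True
  then have "reaches X Q a y" using reaches_Q_a_iff assms by simp
  then have "reaches X Q y z \<longleftrightarrow> reaches X Q a z" using Q.reaches_commute by blast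
  then show ?thesis using reaches_Q_a_iff True by simp
next
  case False
  have "reaches X P b y" using reaches_trans[OF reaches_sym[OF reaches_ab] assms] .
  then have "reaches X Q b y" using reaches_Q_b_iff orbit_dist_from_b_less_iff[OF assms] False by simp
  then have "reaches X Q y z \<longleftrightarrow> reaches X Q b z" using Q.reaches_commute by blast
  also have "\<dots> \<longleftrightarrow> reaches X P a z \<and> \<not> orbit_dist P a z < orbit_dist P a b"
    using reaches_Q_b_iff orbit_dist_from_b_less_iff reaches_commute[OF reaches_ab] by auto
  finally show ?thesis using False by simp
qed

lemma orbit_rel_Q_class_inside:
  assumes "reaches X P a x"
  shows "orbit_rel X Q `` {x} = orbit_rel X Q `` {a} \<or> orbit_rel X Q `` {x} = orbit_rel X Q `` {b}"
proof (cases "orbit_dist P a x < orbit_dist P a b")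
  case True
  then have "reaches X Q a x"
    using reaches_Q_iff[OF reaches_refl[OF a_in], of x] assms orbit_dist_self[OF a_in]
      orbit_dist_ab_pos by simp
  then show ?thesis using Q.orbit_rel_Image_eq by blast
next
  case False
  then have "reaches X Q b x" using reaches_Q_iff[OF reaches_ab, of x] assms by simp
  then show ?thesis using Q.orbit_rel_Image_eq by blast
qed

lemma orbit_rel_Q_class_outside:
  "x \<in> X \<Longrightarrow> \<not> reaches X P a x \<Longrightarrow> orbit_rel X Q `` {x} = orbit_rel X P `` {x}"
  using reaches_Q_outside by (simp add: orbit_rel_Image)

lemma orbit_quotient_Q:
  "X // orbit_rel X Q =
    insert (orbit_rel X Q `` {a}) (insert (orbit_rel X Q `` {b}) (X // orbit_rel X P - {orbit_rel X P `` {a}}))"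
  (is "_ = insert ?Oa (insert ?Ob (_ - {?O}))")
proof (intro equalityI subsetI)
  have P_class: "orbit_rel X P `` {x} = ?O \<longleftrightarrow> reaches X P a x" if "x \<in> X" for x
    using equiv_class_eq_iff[OF equiv_orbit_rel, of x a] that a_in reaches_sym
    by (auto simp: orbit_rel_def)
  {
    fix C assume "C \<in> X // orbit_rel X Q"
    then obtain x where x: "x \<in> X" "C = orbit_rel X Q `` {x}" by (auto elim: quotientE)
    show "C \<in> insert ?Oa (insert ?Ob (X // orbit_rel X P - {?O}))"
    proof (cases "reaches X P a x")
      case True
      then show ?thesis using orbit_rel_Q_class_inside x(2) by blast
    next
      case False
      then show ?thesis
        using orbit_rel_Q_class_outside x P_class quotientI[of x X "orbit_rel X P"] by auto
    qed
  next
    fix C assume C: "C \<in> insert ?Oa (insert ?Ob (X // orbit_rel X P - {?O}))"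
    have "C \<in> X // orbit_rel X Q" if old: "C \<in> X // orbit_rel X P" "C \<noteq> ?O"
    proof -
      obtain x where x: "x \<in> X" "C = orbit_rel X P `` {x}" using old(1) by (auto elim: quotientE)
      then show ?thesis
        using old(2) P_class orbit_rel_Q_class_outside quotientI[of x X "orbit_rel X Q"] by auto
    qed
    then show "C \<in> X // orbit_rel X Q" using C quotientI[OF a_in] quotientI[OF b_in] by auto
  }
qed

lemma orbit_count_split: "orbit_count X Q = orbit_count X P + 1"
proof -
  let ?RP = "orbit_rel X P" and ?RQ = "orbit_rel X Q"
  let ?O = "?RP `` {a}" and ?Oa = "?RQ `` {a}" and ?Ob = "?RQ `` {b}"
  have in_own_class: "a \<in> ?Oa" "b \<in> ?Ob" "a \<in> ?O" "b \<in> ?O"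
    using Q.reaches_refl[OF a_in] Q.reaches_refl[OF b_in] reaches_refl[OF a_in] reaches_ab
    by (auto simp: orbit_rel_Image)
  have apart: "b \<notin> ?Oa" "a \<notin> ?Ob"
    using reaches_Q_a_iff Q.reaches_sym by (auto simp: orbit_rel_Image)
  have sub: "?Oa \<subseteq> ?O" "?Ob \<subseteq> ?O"
    using reaches_Q_a_iff reaches_Q_b_iff reaches_trans[OF reaches_ab] by (auto simp: orbit_rel_Image)
  have class_meeting_O: "D = ?O" if "D \<in> X // ?RP" "x \<in> D" "x \<in> ?O" for D x
    using quotient_disj[OF equiv_orbit_rel that(1) quotientI[OF a_in]] that(2,3) by blast
  have "?Oa \<notin> X // ?RP" "?Ob \<notin> X // ?RP"
    using class_meeting_O in_own_class sub apart by blast+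
  moreover have "?Oa \<noteq> ?Ob" using apart(1) in_own_class(2) by metis
  ultimately show ?thesis
    unfolding orbit_count_def orbit_quotient_Q
    using card_replace_by_two[OF finite_orbit_quotient quotientI[OF a_in]] by simp
qed

end

text \<open>Seen from \<open>c\<close>, the points \<open>e\<close> and \<open>f\<close> lie on different sides of \<open>d\<close>: on the circle of the
  orbit, the chord \<open>e f\<close> crosses the chord \<open>c d\<close>.\<close>

definition chords_cross :: "'a set \<Rightarrow> ('a \<Rightarrow> 'a) \<Rightarrow> 'a \<Rightarrow> 'a \<Rightarrow> 'a \<Rightarrow> 'a \<Rightarrow> bool" where
  "chords_cross X P c d e f \<longleftrightarrow> reaches X P c d \<and> reaches X P c e \<and> reaches X P c f \<and>
     ((orbit_dist P c e < orbit_dist P c d) \<noteq> (orbit_dist P c f < orbit_dist P c d))"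

lemma chords_cross_commute_right: "chords_cross X P c d e f = chords_cross X P c d f e"
  unfolding chords_cross_def by blast

context orbit_split
begin

lemma reaches_Q_iff_not_cross:
  assumes "c \<in> X"
  shows "reaches X Q c d \<longleftrightarrow> reaches X P c d \<and> \<not> chords_cross X P a b c d"
proof (cases "reaches X P a c")
  case True
  then show ?thesis
    using reaches_Q_iff[OF True, of d] reaches_commute[OF True] reaches_ab
    unfolding chords_cross_def by auto
next
  case False
  then show ?thesis using reaches_Q_outside[OF assms False] unfolding chords_cross_def by simp
qed

lemma chords_cross_Q_iff_first_arc:
  assumes ac: "reaches X P a c" "orbit_dist P a c < orbit_dist P a b"
    and cd: "reaches X Q c d" and ef: "reaches X Q e f"
  shows "chords_cross X Q c d e f \<longleftrightarrow> chords_cross X P c d e f"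
proof -
  let ?m = "orbit_dist P a b" and ?n = "period P a" and ?pos = "orbit_dist P a"
  have d: "reaches X P a d \<and> ?pos d < ?m" using reaches_Q_iff[OF ac(1)] cd ac(2) by simp
  have Q_ac: "reaches X Q a c" using reaches_Q_a_iff ac by simp
  have dist_P: "orbit_dist P c y = (?pos y + ?n - ?pos c) mod ?n" if "reaches X P a y" for y
    using orbit_dist_shift[OF ac(1) that] .
  have dist_Q: "orbit_dist Q c y = (?pos y + ?m - ?pos c) mod ?m"
    if "reaches X P a y" "?pos y < ?m" for y
  proof -
    have "reaches X Q a y" using reaches_Q_a_iff that by simp
    then have "orbit_dist Q c y = (orbit_dist Q a y + period Q a - orbit_dist Q a c) mod period Q a"
      using Q.orbit_dist_shift[OF Q_ac] by simp
    then show ?thesis using orbit_dist_Q_a period_Q_a that ac by simp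
  qed
  have lt: "?pos y < ?n" if "reaches X P a y" for y using orbit_dist_less_period[OF that] .
  show ?thesis
  proof (cases "reaches X P a e \<and> ?pos e < ?m")
    case True
    have f: "reaches X P a f \<and> ?pos f < ?m" using reaches_Q_iff[of e f] True ef by simp
    have reach_Q: "reaches X Q c d \<and> reaches X Q c e \<and> reaches X Q c f"
      using reaches_Q_iff[OF ac(1)] ac(2) d True f by simp
    have reach_P: "reaches X P c d \<and> reaches X P c e \<and> reaches X P c f"
      using reaches_commute[OF ac(1)] d True f by simp
    have "(orbit_dist Q c y < orbit_dist Q c d) \<longleftrightarrow> (orbit_dist P c y < orbit_dist P c d)"
      if "reaches X P a y \<and> ?pos y < ?m" for y
      using dist_Q dist_P d that ac orbit_dist_ab_less
        cyclic_order_restrict[of "?pos c" ?m "?pos d" "?pos y" ?n] by simp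
    then show ?thesis unfolding chords_cross_def using reach_Q reach_P True f by simp
  next
    case False
    have "\<not> reaches X Q c e" using reaches_Q_iff[OF ac(1)] ac(2) False by simp
    moreover have "\<not> chords_cross X P c d e f"
    proof (cases "reaches X P a e")
      case False
      then show ?thesis using reaches_commute[OF ac(1)] unfolding chords_cross_def by simp
    next
      case True
      then have e: "\<not> ?pos e < ?m" using \<open>\<not> (reaches X P a e \<and> ?pos e < ?m)\<close> by simp
      have f: "reaches X P a f \<and> \<not> ?pos f < ?m" using reaches_Q_iff[OF True, of f] ef e by simp
      have "((?pos e + ?n - ?pos c) mod ?n < (?pos d + ?n - ?pos c) mod ?n) \<longleftrightarrow>
          ((?pos f + ?n - ?pos c) mod ?n < (?pos d + ?n - ?pos c) mod ?n)"
        by (rule cyclic_order_same_arc) (use ac d e f lt[OF True] lt[of f] in auto)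
      then show ?thesis using dist_P[OF True] dist_P[of d] dist_P[of f] d f unfolding chords_cross_def by simp
    qed
    ultimately show ?thesis unfolding chords_cross_def by simp
  qed
qed

lemma chords_cross_Q_iff:
  assumes c: "c \<in> X" and cd: "reaches X Q c d" and ef: "reaches X Q e f"
  shows "chords_cross X Q c d e f \<longleftrightarrow> chords_cross X P c d e f"
proof (cases "reaches X P a c")
  case False
  then show ?thesis
    unfolding chords_cross_def using reaches_Q_outside[OF c False] orbit_dist_Q_outside[OF c False]
    by simp
next
  case True
  show ?thesis
  proof (cases "orbit_dist P a c < orbit_dist P a b")
    case True
    then show ?thesis using chords_cross_Q_iff_first_arc[OF \<open>reaches X P a c\<close> _ cd ef] by simp
  next
    case False
    interpret ba: orbit_split X P b a using orbit_split_swap .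
    have "reaches X P b c" using reaches_trans[OF reaches_sym[OF reaches_ab] True] .
    moreover have "orbit_dist P b c < orbit_dist P b a"
      using orbit_dist_from_b_less_iff[OF True] False by simp
    ultimately show ?thesis
      using ba.chords_cross_Q_iff_first_arc cd ef by (simp add: transpose_commute)
  qed
qed

lemma chords_cross_swap_first: "chords_cross X P a b c d \<longleftrightarrow> chords_cross X P b a c d"
proof (cases "reaches X P a c \<and> reaches X P a d")
  case True
  then have "reaches X P b c \<and> reaches X P b d" using reaches_commute[OF reaches_ab] by simp
  then show ?thesis
    unfolding chords_cross_def using True orbit_dist_from_b_less_iff reaches_ab reaches_sym[OF reaches_ab]
    by auto
next
  case False
  then have "\<not> (reaches X P b c \<and> reaches X P b d)" using reaches_commute[OF reaches_ab] by simp
  then show ?thesis unfolding chords_cross_def using False by auto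
qed

lemma chords_cross_sym:
  assumes "c \<noteq> a" "c \<noteq> b" "d \<noteq> a" "d \<noteq> b" "c \<noteq> d"
  shows "chords_cross X P a b c d \<longleftrightarrow> chords_cross X P c d a b"
proof (cases "reaches X P a c \<and> reaches X P a d")
  case False
  then have "\<not> chords_cross X P c d a b"
    unfolding chords_cross_def using reaches_sym reaches_trans by blast
  then show ?thesis using False unfolding chords_cross_def by auto
next
  case True
  let ?n = "period P a" and ?m = "orbit_dist P a b" and ?pos = "orbit_dist P a"
  have pos_pos: "0 < ?pos c" "0 < ?pos d" using orbit_dist_pos True assms by auto
  have pos_ne: "?m \<noteq> ?pos c" "?m \<noteq> ?pos d" "?pos c \<noteq> ?pos d"
    using orbit_dist_inj True reaches_ab assms by metis+
  have lts: "?pos c < ?n" "?pos d < ?n" using orbit_dist_less_period True by auto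
  have "orbit_dist P c a = ?n - ?pos c"
    using orbit_dist_shift[OF True[THEN conjunct1] reaches_refl[OF a_in]] orbit_dist_self[OF a_in]
      pos_pos lts by simp
  moreover have "orbit_dist P c b = (?m + ?n - ?pos c) mod ?n"
    using orbit_dist_shift[OF True[THEN conjunct1] reaches_ab] .
  moreover have "orbit_dist P c d = (?pos d + ?n - ?pos c) mod ?n"
    using orbit_dist_shift[OF True[THEN conjunct1] True[THEN conjunct2]] .
  moreover have "reaches X P c d" "reaches X P c a" "reaches X P c b"
    using True reaches_ab reaches_sym reaches_trans by blast+
  ultimately show ?thesis
    unfolding chords_cross_def
    using True reaches_ab cyclic_order_interleave[OF orbit_dist_ab_less lts orbit_dist_ab_pos pos_pos pos_ne]
    by simp
qed

end

section \<open>Products of disjoint transpositions\<close>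

definition pair_elems :: "('a \<times> 'a) list \<Rightarrow> 'a list" where
  "pair_elems ps = concat (map (\<lambda>(a, b). [a, b]) ps)"

fun transps :: "('a \<times> 'a) list \<Rightarrow> 'a \<Rightarrow> 'a" where
  "transps [] = id"
| "transps ((a, b) # ps) = transps ps \<circ> transpose a b"

definition noncrossing_pairs :: "'a set \<Rightarrow> ('a \<Rightarrow> 'a) \<Rightarrow> ('a \<times> 'a) list \<Rightarrow> bool" where
  "noncrossing_pairs X P ps \<longleftrightarrow>
     (\<forall>a b. (a, b) \<in> set ps \<longrightarrow> reaches X P a b) \<and>
     (\<forall>a b c d. (a, b) \<in> set ps \<longrightarrow> (c, d) \<in> set ps \<longrightarrow> (a, b) \<noteq> (c, d) \<longrightarrow>
        \<not> chords_cross X P a b c d)"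

lemma pair_elems_Cons [simp]: "pair_elems ((a, b) # ps) = a # b # pair_elems ps"
  by (simp add: pair_elems_def)

lemma pair_elems_mem: "(c, d) \<in> set ps \<Longrightarrow> c \<in> set (pair_elems ps) \<and> d \<in> set (pair_elems ps)"
  by (auto simp: pair_elems_def)

lemma distinct_pair_elems_neq: "distinct (pair_elems ps) \<Longrightarrow> (c, d) \<in> set ps \<Longrightarrow> c \<noteq> d"
  by (induction ps) (auto dest: pair_elems_mem)

lemma set_pair_elems_map: "set (pair_elems (map (\<lambda>x. (x, k x)) xs)) = set xs \<union> k ` set xs"
  by (induction xs) (auto simp: pair_elems_def)

lemma distinct_pair_elems_map:
  assumes "distinct xs" "inj_on k (set xs)" "\<forall>x\<in>set xs. \<forall>y\<in>set xs. x \<noteq> k y"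
  shows "distinct (pair_elems (map (\<lambda>x. (x, k x)) xs))"
  using assms
proof (induction xs)
  case (Cons x xs)
  then have "distinct (pair_elems (map (\<lambda>x. (x, k x)) xs))" by (simp add: inj_on_def)
  then show ?case using Cons.prems unfolding set_pair_elems_map inj_on_def by (auto simp: set_pair_elems_map)
qed (simp add: pair_elems_def)

lemma transps_other: "z \<notin> set (pair_elems ps) \<Longrightarrow> transps ps z = z"
  by (induction ps rule: transps.induct) auto

lemma transps_pair:
  "distinct (pair_elems ps) \<Longrightarrow> (a, b) \<in> set ps \<Longrightarrow> transps ps a = b \<and> transps ps b = a"
proof (induction ps rule: transps.induct)
  case (2 c d ps)
  show ?case
  proof (cases "(a, b) = (c, d)")
    case True
    then show ?thesis using 2 transps_other[of c ps] transps_other[of d ps] by auto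
  next
    case False
    then have "(a, b) \<in> set ps" using "2.prems"(2) by auto
    then show ?thesis using 2 pair_elems_mem[of a b ps] by (auto simp: transpose_def)
  qed
qed simp

context orbit_split
begin

lemma noncrossing_pairs_Q_iff:
  assumes "\<And>c d. (c, d) \<in> set ps \<Longrightarrow> c \<in> X \<and> c \<noteq> d \<and> c \<notin> {a, b} \<and> d \<notin> {a, b}"
  shows "noncrossing_pairs X Q ps \<longleftrightarrow> noncrossing_pairs X P ((a, b) # ps)"
proof -
  have Q_reach: "reaches X Q c d \<longleftrightarrow> reaches X P c d \<and> \<not> chords_cross X P a b c d"
    if "(c, d) \<in> set ps" for c d
    using reaches_Q_iff_not_cross assms[OF that] by blast
  have sym: "chords_cross X P c d a b \<longleftrightarrow> chords_cross X P a b c d" if "(c, d) \<in> set ps" for c d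
    using chords_cross_sym assms[OF that] by auto
  have Q_cross: "chords_cross X Q c d e f \<longleftrightarrow> chords_cross X P c d e f"
    if "(c, d) \<in> set ps" "reaches X Q c d" "reaches X Q e f" for c d e f
    using chords_cross_Q_iff assms[OF that(1)] that(2,3) by blast
  have ab_notin: "(a, b) \<notin> set ps" using assms by blast
  show ?thesis
  proof
    assume Q: "noncrossing_pairs X Q ps"
    have reach_Q: "reaches X Q c d" if "(c, d) \<in> set ps" for c d
      using Q that unfolding noncrossing_pairs_def by blast
    show "noncrossing_pairs X P ((a, b) # ps)"
      unfolding noncrossing_pairs_def
    proof (intro conjI allI impI)
      fix c d assume "(c, d) \<in> set ((a, b) # ps)"
      then show "reaches X P c d" using reaches_ab Q_reach reach_Q by auto
    next
      fix c d e f assume cd: "(c, d) \<in> set ((a, b) # ps)" and ef: "(e, f) \<in> set ((a, b) # ps)"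
        and ne: "(c, d) \<noteq> (e, f)"
      consider "(c, d) = (a, b)" "(e, f) \<in> set ps" | "(e, f) = (a, b)" "(c, d) \<in> set ps"
        | "(c, d) \<in> set ps" "(e, f) \<in> set ps" using cd ef ne by auto
      then show "\<not> chords_cross X P c d e f"
      proof cases
        case 3
        then show ?thesis
          using Q Q_cross[OF 3(1) reach_Q[OF 3(1)] reach_Q[OF 3(2)]] ne
          unfolding noncrossing_pairs_def by blast
      qed (use Q_reach reach_Q sym in auto)
    qed
  next
    assume P: "noncrossing_pairs X P ((a, b) # ps)"
    have reach_Q: "reaches X Q c d" if cd: "(c, d) \<in> set ps" for c d
    proof -
      have "(a, b) \<noteq> (c, d)" using cd ab_notin by auto
      then show ?thesis using P cd Q_reach unfolding noncrossing_pairs_def by auto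
    qed
    show "noncrossing_pairs X Q ps"
      unfolding noncrossing_pairs_def
    proof (intro conjI allI impI)
      fix c d e f assume cd: "(c, d) \<in> set ps" and ef: "(e, f) \<in> set ps" and "(c, d) \<noteq> (e, f)"
      then show "\<not> chords_cross X Q c d e f"
        using P Q_cross[OF cd reach_Q[OF cd] reach_Q[OF ef]] unfolding noncrossing_pairs_def by auto
    qed (rule reach_Q)
  qed
qed

end

lemma orbit_count_transps:
  assumes "finite_perm X P" "distinct (pair_elems ps)" "set (pair_elems ps) \<subseteq> X"
  shows "orbit_count X (transps ps \<circ> P) \<le> orbit_count X P + length ps \<and>
    (orbit_count X (transps ps \<circ> P) = orbit_count X P + length ps \<longleftrightarrow> noncrossing_pairs X P ps)"
  using assms
proof (induction ps arbitrary: P)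
  case Nil
  then show ?case by (simp add: noncrossing_pairs_def)
next
  case (Cons p ps)
  obtain a b where p: "p = (a, b)" by (cases p)
  interpret finite_perm X P using Cons.prems(1) .
  have ab: "a \<in> X" "b \<in> X" "a \<noteq> b" using Cons.prems(2,3) p by auto
  let ?Q = "transpose a b \<circ> P"
  define R where "R = transps ps \<circ> ?Q"
  have split_off: "transps (p # ps) \<circ> P = R" by (simp add: R_def p comp_assoc)
  have IH: "orbit_count X R \<le> orbit_count X ?Q + length ps \<and>
      (orbit_count X R = orbit_count X ?Q + length ps \<longleftrightarrow> noncrossing_pairs X ?Q ps)"
    using Cons.IH[OF finite_perm_transpose_comp[OF ab(1,2)]] Cons.prems(2,3) p unfolding R_def by (simp add: comp_def)
  moreover have "orbit_count X ?Q \<le> orbit_count X P \<and> \<not> noncrossing_pairs X P (p # ps)"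
    if "\<not> reaches X P a b"
    using orbit_count_transpose_merge[OF ab(1,2) that] that p unfolding noncrossing_pairs_def by auto
  moreover have "orbit_count X ?Q = orbit_count X P + 1 \<and>
      (noncrossing_pairs X ?Q ps \<longleftrightarrow> noncrossing_pairs X P (p # ps))"
    if "reaches X P a b"
  proof -
    interpret orbit_split X P a b by unfold_locales (use that ab in auto)
    have "c \<in> X \<and> c \<noteq> d \<and> c \<notin> {a, b} \<and> d \<notin> {a, b}" if "(c, d) \<in> set ps" for c d
      using pair_elems_mem[OF that] distinct_pair_elems_neq[of ps c d] Cons.prems(2,3) p that by auto
    then show ?thesis using orbit_count_split noncrossing_pairs_Q_iff p by simp
  qed
  ultimately show ?case unfolding split_off using IH by (cases "reaches X P a b") auto
qed

section \<open>Cycles of \<open>\<Gamma>\<^sub>N\<close> as orbits of the traversal map\<close>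

lemma hflip_hflip [simp]: "hflip (hflip h) = h"
  by (simp add: hflip_def)

lemma hflip_neq: "hflip h \<noteq> h"
  by (simp add: hflip_def prod_eq_iff)

lemma hflip_in: "h \<in> halves G H \<Longrightarrow> hflip h \<in> halves G H"
  by (auto simp: halves_def hflip_def)

lemma finite_halves:
  assumes "finite (edges G)" "finite (edges H)" shows "finite (halves G H)"
proof -
  have "halves G H \<subseteq> (Inl ` edges G \<union> Inr ` edges H) \<times> UNIV" by (auto simp: halves_def)
  then show ?thesis by (rule finite_subset) (use assms in simp)
qed

locale half_involution =
  fixes G :: "('v,'a) mgraph" and H :: "('v,'b) mgraph" and N :: "('a,'b) half \<Rightarrow> ('a,'b) half"
  assumes finite_X: "finite (halves G H)"
    and N_in: "h \<in> halves G H \<Longrightarrow> N h \<in> halves G H"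
    and N_neq: "h \<in> halves G H \<Longrightarrow> N h \<noteq> h"
    and N_N [simp]: "N (N h) = h"
begin

abbreviation "X \<equiv> halves G H"
abbreviation "T \<equiv> Tstep N"

lemma T_apply: "T h = N (hflip h)"
  by (simp add: Tstep_def)

sublocale T: finite_perm X T
proof
  show "x \<in> X \<Longrightarrow> T x \<in> X" for x using N_in[OF hflip_in] by (simp add: T_apply)
  show "inj_on T X" by (rule inj_onI) (metis N_N T_apply hflip_hflip)
qed (rule finite_X)

lemma T_hflip_T: "T (hflip (T z)) = hflip z"
  by (simp add: T_apply)

text \<open>\<open>T\<close> runs through a cycle of \<open>\<Gamma>\<^sub>N\<close> in one direction, \<open>hflip\<close> reverses the direction. An
  orbit containing both \<open>x\<close> and \<open>hflip x\<close> would make the two directions meet in a half-edge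
  fixed by \<open>hflip\<close> or by \<open>N\<close>.\<close>

lemma funpow_T_neq_hflip: assumes x: "x \<in> X" shows "(T ^^ k) x \<noteq> hflip x"
proof
  assume eq: "(T ^^ k) x = hflip x"
  have mirror: "hflip ((T ^^ j) x) = (T ^^ (k - j)) x" if "j \<le> k" for j
    using that
  proof (induction j)
    case (Suc j)
    let ?y = "(T ^^ (k - Suc j)) x"
    have "k - j = Suc (k - Suc j)" using Suc.prems by simp
    then have "(T ^^ (k - j)) x = T ?y" by simp
    then have "hflip ((T ^^ j) x) = N (hflip ?y)" using Suc T_apply[of ?y] by simp
    then have "N (hflip ((T ^^ j) x)) = hflip ?y" by (metis N_N)
    then show ?case using T_apply[of "(T ^^ j) x"] by simp
  qed (simp add: eq)
  obtain i where "k = 2 * i \<or> k = 2 * i + 1" by (metis odd_two_times_div_two_succ even_two_times_div_two)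
  then show False
  proof
    assume "k = 2 * i"
    then show False using mirror[of i] hflip_neq[of "(T ^^ i) x"] by simp
  next
    assume "k = 2 * i + 1"
    then have "hflip ((T ^^ i) x) = N (hflip ((T ^^ i) x))"
      using mirror[of i] T_apply[of "(T ^^ i) x"] by (simp add: Suc_diff_le)
    then show False using N_neq hflip_in T.funpow_in[OF x] by metis
  qed
qed

lemma not_reaches_hflip: "\<not> reaches X T x (hflip x)"
  using funpow_T_neq_hflip unfolding reaches_def by blast

lemma reaches_reverse: assumes "reaches X T x y" shows "reaches X T (hflip y) (hflip x)"
proof -
  obtain k where k: "(T ^^ k) x = y" using assms unfolding reaches_def by auto
  have "(T ^^ k) (hflip ((T ^^ k) z)) = hflip z" for z
  proof (induction k arbitrary: z)
    case (Suc k)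
    have "(T ^^ Suc k) (hflip ((T ^^ Suc k) z)) = (T ^^ k) (T (hflip (T ((T ^^ k) z))))"
      by (simp add: funpow_swap1)
    then show ?case using Suc by (simp add: T_hflip_T)
  qed simp
  then show ?thesis
    using k hflip_in T.reaches_in[OF assms] unfolding reaches_def by blast
qed

lemma reaches_hflip_N: "h \<in> X \<Longrightarrow> reaches X T (hflip h) (N h)"
  using T.reaches_funpow[OF hflip_in, of h 1] T_apply[of "hflip h"] by simp

lemma not_reaches_N: "h \<in> X \<Longrightarrow> \<not> reaches X T h (N h)"
  using reaches_hflip_N not_reaches_hflip T.reaches_sym T.reaches_trans by blast

lemma conn_sym: "(x, y) \<in> conn G H N \<Longrightarrow> (y, x) \<in> conn G H N"
  unfolding conn_def by (metis converse_Un converse_converse rtrancl_converseI sup_commute)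

lemma conn_trans: "(x, y) \<in> conn G H N \<Longrightarrow> (y, z) \<in> conn G H N \<Longrightarrow> (x, z) \<in> conn G H N"
  unfolding conn_def by (rule rtrancl_trans)

lemma conn_refl: "(x, x) \<in> conn G H N"
  by (simp add: conn_def)

lemma conn_hflip: "x \<in> X \<Longrightarrow> (x, hflip x) \<in> conn G H N"
  unfolding conn_def gamma_rel_def by (rule r_into_rtrancl) blast

lemma conn_N: "x \<in> X \<Longrightarrow> (x, N x) \<in> conn G H N"
  unfolding conn_def gamma_rel_def by (rule r_into_rtrancl) blast

lemma reaches_conn: assumes "reaches X T x y" shows "(x, y) \<in> conn G H N"
proof -
  obtain k where k: "(T ^^ k) x = y" and x: "x \<in> X" using assms unfolding reaches_def by auto
  have "(x, (T ^^ k) x) \<in> conn G H N" for k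
  proof (induction k)
    case (Suc k)
    have "((T ^^ k) x, T ((T ^^ k) x)) \<in> conn G H N"
      using conn_hflip conn_N hflip_in T.funpow_in[OF x] unfolding conn_def T_apply
      by (meson rtrancl_trans)
    then show ?case using Suc unfolding conn_def by simp
  qed (simp add: conn_def)
  then show ?thesis using k by blast
qed

lemma conn_class:
  assumes x: "x \<in> X" shows "conn G H N `` {x} = {y. reaches X T x y \<or> reaches X T (hflip x) y}"
proof (intro equalityI subsetI)
  fix y assume "y \<in> {y. reaches X T x y \<or> reaches X T (hflip x) y}"
  then show "y \<in> conn G H N `` {x}"
    using reaches_conn conn_hflip[OF x] unfolding conn_def by (blast intro: rtrancl_trans)
next
  let ?K = "{y. reaches X T x y \<or> reaches X T (hflip x) y}"
  have closed: "z \<in> ?K" if y: "y \<in> ?K" and yz: "(y, z) \<in> gamma_rel G H N \<union> (gamma_rel G H N)\<inverse>"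
    for y z
  proof -
    have "y \<in> X" using y T.reaches_in by blast
    have "hflip y \<in> ?K" using y reaches_reverse T.reaches_sym hflip_hflip by fastforce
    moreover have "N y \<in> ?K"
      using calculation reaches_hflip_N[OF \<open>y \<in> X\<close>] T.reaches_trans by blast
    moreover have "z = hflip y \<or> z = N y"
      using yz unfolding gamma_rel_def by (auto simp: hflip_def)
    ultimately show ?thesis by blast
  qed
  fix z assume "z \<in> conn G H N `` {x}"
  then have "(x, z) \<in> conn G H N" by simp
  then show "z \<in> ?K" unfolding conn_def
    by (induction rule: rtrancl_induct) (use T.reaches_refl[OF x] closed in auto)
qed

lemma conn_class_subset: "x \<in> X \<Longrightarrow> conn G H N `` {x} \<subseteq> X"
  using conn_class T.reaches_in by blast

lemma equiv_conn: "equiv X (conn G H N \<inter> X \<times> X)"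
proof (rule equivI)
  show "refl_on X (conn G H N \<inter> X \<times> X)" by (auto simp: refl_on_def conn_def)
  show "sym (conn G H N \<inter> X \<times> X)" using conn_sym by (auto simp: sym_def)
  show "trans (conn G H N \<inter> X \<times> X)" unfolding trans_def conn_def by (blast intro: rtrancl_trans)
qed auto

lemma double_cycles: "2 * cycles G H N = orbit_count X T"
proof -
  let ?E = "orbit_rel X T" and ?E' = "conn G H N \<inter> X \<times> X"
  have Image_E': "?E' `` {x} = conn G H N `` {x}" if "x \<in> X" for x
    using conn_class_subset[OF that] that by blast
  have "X // conn G H N = X // ?E'"
    unfolding quotient_def using Image_E' by auto
  moreover have "card (X // ?E) = 2 * card (X // ?E')"
  proof (rule card_quotient_refinement[OF finite_X T.equiv_orbit_rel equiv_conn])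
    show "?E \<subseteq> ?E'" using reaches_conn T.reaches_in by (auto simp: orbit_rel_def)
    fix K assume "K \<in> X // ?E'"
    then obtain x where x: "x \<in> X" "K = conn G H N `` {x}" using Image_E' by (auto elim: quotientE)
    have "{D \<in> X // ?E. D \<subseteq> K} = {?E `` {x}, ?E `` {hflip x}}"
    proof (intro equalityI subsetI)
      fix D assume D: "D \<in> {D \<in> X // ?E. D \<subseteq> K}"
      then obtain y where y: "y \<in> X" "D = ?E `` {y}" by (auto elim: quotientE)
      have "y \<in> K" using D y T.reaches_refl[OF y(1)] by (auto simp: orbit_rel_Image)
      then have "reaches X T x y \<or> reaches X T (hflip x) y" using x conn_class by simp
      then show "D \<in> {?E `` {x}, ?E `` {hflip x}}"
        using y(2) T.orbit_rel_Image_eq by blast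
    next
      have "?E `` {x} \<subseteq> K" "?E `` {hflip x} \<subseteq> K"
        using x conn_class[OF x(1)] by (auto simp: orbit_rel_Image)
      then show "D \<in> {D \<in> X // ?E. D \<subseteq> K}" if "D \<in> {?E `` {x}, ?E `` {hflip x}}" for D
        using that quotientI[OF x(1)] quotientI[OF hflip_in[OF x(1)]] by blast
    qed
    moreover have "hflip x \<in> ?E `` {hflip x}" "hflip x \<notin> ?E `` {x}"
      using not_reaches_hflip[of x] T.reaches_refl[OF hflip_in[OF x(1)]] by (auto simp: orbit_rel_Image)
    then have "?E `` {x} \<noteq> ?E `` {hflip x}" by blast
    ultimately show "card {D \<in> X // ?E. D \<subseteq> K} = 2" by simp
  qed
  ultimately show ?thesis unfolding cycles_def orbit_count_def by simp
qed

end

section \<open>The switched matchings as a product of transpositions\<close>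

lemma card_G_halves_at: "card {h \<in> halves G H. isGh h \<and> hvtx G H h = v} = deg G v"
proof -
  have "{h \<in> halves G H. isGh h \<and> hvtx G H h = v} =
      (\<lambda>(a, s). (Inl a, s)) ` {(a, s). a \<in> edges G \<and> ep G a s = v}"
    by (auto simp: halves_def isGh_def hvtx_def image_iff)
  then show ?thesis unfolding deg_def by (simp add: card_image inj_on_def)
qed

lemma card_H_halves_at: "card {h \<in> halves G H. \<not> isGh h \<and> hvtx G H h = v} = deg H v"
proof -
  have "{h \<in> halves G H. \<not> isGh h \<and> hvtx G H h = v} =
      (\<lambda>(b, s). (Inr b, s)) ` {(b, s). b \<in> edges H \<and> ep H b s = v}"
    by (auto simp: halves_def isGh_def hvtx_def image_iff)
  then show ?thesis unfolding deg_def by (simp add: card_image inj_on_def)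
qed

lemma card_2_other_unique: "card Z = 2 \<Longrightarrow> h \<in> Z \<Longrightarrow> \<exists>!h'. h' \<in> Z \<and> h' \<noteq> h"
  by (auto simp: card_2_iff)

definition twin :: "('v,'a) mgraph \<Rightarrow> ('v,'b) mgraph \<Rightarrow> ('a,'b) half \<Rightarrow> ('a,'b) half" where
  "twin G H h = (THE h'. h' \<in> halves G H \<and> hvtx G H h' = hvtx G H h \<and> h' \<noteq> h \<and> isGh h' = isGh h)"

lemma flipS_twin:
  "flipS G H M S h = (if h \<in> halves G H \<and> hvtx G H h \<in> S then twin G H h else M h)"
  by (simp add: flipS_def twin_def)

locale pm_flip =
  fixes V :: "'v set" and G :: "('v,'a) mgraph" and H :: "('v,'b) mgraph"
    and M :: "('a,'b) half \<Rightarrow> ('a,'b) half" and S :: "'v set"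
  assumes finite_V: "finite V" and G_on: "multigraph_on V G" and H_on: "multigraph_on V H"
    and degrees: "\<forall>v\<in>V. deg G v = deg H v"
    and M_PM: "M \<in> PM G H" and S_V4: "S \<subseteq> V4 V G"
begin

abbreviation "X \<equiv> halves G H"
abbreviation "T \<equiv> Tstep M"

lemma M_in: "h \<in> X \<Longrightarrow> M h \<in> X"
  and M_vtx: "h \<in> X \<Longrightarrow> hvtx G H (M h) = hvtx G H h"
  and M_kind: "h \<in> X \<Longrightarrow> isGh (M h) \<noteq> isGh h"
  using M_PM by (auto simp: PM_def is_pmc_def)

lemma M_M [simp]: "M (M h) = h"
proof (cases "h \<in> X")
  case False
  then have "M h = h" using M_PM unfolding PM_def is_pmc_def by blast
  then show ?thesis by simp
qed (use M_PM in \<open>simp add: PM_def is_pmc_def\<close>)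

sublocale M: half_involution G H M
proof
  show "finite X" using G_on H_on by (intro finite_halves) (auto simp: multigraph_on_def)
qed (use M_PM in \<open>auto simp: PM_def is_pmc_def\<close>)

lemma T_apply: "T h = M (hflip h)"
  by (simp add: Tstep_def)

lemma V4_deg: "v \<in> V4 V G \<Longrightarrow> deg G v = 2 \<and> deg H v = 2"
  using degrees by (auto simp: V4_def)

lemma card_same_kind_at:
  assumes "h \<in> X" "hvtx G H h \<in> V4 V G"
  shows "card {h' \<in> X. hvtx G H h' = hvtx G H h \<and> isGh h' = isGh h} = 2"
proof (cases "isGh h")
  case True
  then show ?thesis
    using card_G_halves_at[of G H "hvtx G H h"] V4_deg[OF assms(2)] by (simp add: conj_commute)
next
  case False
  then show ?thesis
    using card_H_halves_at[of G H "hvtx G H h"] V4_deg[OF assms(2)] by (simp add: conj_commute)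
qed

lemma twin_ex1:
  assumes "h \<in> X" "hvtx G H h \<in> V4 V G"
  shows "\<exists>!h'. h' \<in> X \<and> hvtx G H h' = hvtx G H h \<and> h' \<noteq> h \<and> isGh h' = isGh h"
  using card_2_other_unique[OF card_same_kind_at[OF assms], of h] assms(1) by auto

lemma twin:
  assumes "h \<in> X" "hvtx G H h \<in> V4 V G"
  shows "twin G H h \<in> X" "hvtx G H (twin G H h) = hvtx G H h" "twin G H h \<noteq> h"
    "isGh (twin G H h) = isGh h"
  using theI'[OF twin_ex1[OF assms]] unfolding twin_def by auto

lemma twin_unique:
  assumes "h \<in> X" "hvtx G H h \<in> V4 V G"
    and "h' \<in> X" "hvtx G H h' = hvtx G H h" "h' \<noteq> h" "isGh h' = isGh h"
  shows "h' = twin G H h"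
  using twin_ex1[OF assms(1,2)] twin[OF assms(1,2)] assms(3-6) by blast

lemma twin_twin: assumes "h \<in> X" "hvtx G H h \<in> V4 V G" shows "twin G H (twin G H h) = h"
  using twin_unique[OF twin(1) _ assms(1)] twin[OF assms] assms by simp

lemma twin_M:
  assumes h: "h \<in> X" and v: "hvtx G H h \<in> V4 V G" shows "twin G H (M h) = M (twin G H h)"
proof -
  note tw = twin[OF h v]
  have "M (twin G H h) \<noteq> M h" using tw(3) M_M by metis
  moreover have "isGh (M (twin G H h)) = isGh (M h)" using M_kind h tw(1,4) by blast
  ultimately show ?thesis
    using twin_unique[OF M_in[OF h], of "M (twin G H h)"] M_in[OF tw(1)] M_vtx[OF tw(1)] M_vtx[OF h]
      tw(2) v by simp
qed

lemma halves_at_vertex: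
  assumes g: "g \<in> X" "isGh g" "hvtx G H g \<in> V4 V G" and h: "h \<in> X" "hvtx G H h = hvtx G H g"
  shows "h = g \<or> h = twin G H g \<or> h = M g \<or> h = M (twin G H g)"
proof (cases "isGh h")
  case True
  then show ?thesis using twin_unique[OF g(1,3) h] g(2) by blast
next
  case False
  have Mg: "M g \<in> X" "hvtx G H (M g) \<in> V4 V G" "\<not> isGh (M g)"
    using M_in M_vtx M_kind g by auto
  have "h = M g \<or> h = twin G H (M g)"
    using twin_unique[OF Mg(1,2) h(1)] h(2) M_vtx[OF g(1)] False Mg(3) by auto
  then show ?thesis using twin_M[OF g(1,3)] by auto
qed

lemma half_involution_flipS: "half_involution G H (flipS G H M S)"
proof
  show "finite X" by (rule M.finite_X)
  fix h
  show "flipS G H M S (flipS G H M S h) = h"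
  proof (cases "h \<in> X \<and> hvtx G H h \<in> S")
    case True
    then have "hvtx G H h \<in> V4 V G" using S_V4 by auto
    then show ?thesis using True twin[of h] twin_twin[of h] by (simp add: flipS_twin)
  next
    case False
    then have "\<not> (M h \<in> X \<and> hvtx G H (M h) \<in> S)" using M_in M_vtx M_M by metis
    then have "flipS G H M S (M h) = h" unfolding flipS_twin by (subst if_not_P) simp_all
    moreover have "flipS G H M S h = M h" unfolding flipS_twin using False by (rule if_not_P)
    ultimately show ?thesis by simp
  qed
  assume h: "h \<in> X"
  show "flipS G H M S h \<in> X" "flipS G H M S h \<noteq> h"
    using twin[OF h] M_in[OF h] M.N_neq[OF h] S_V4 by (auto simp: flipS_twin)
qed

definition flip_gens :: "('a,'b) half set" where
  "flip_gens = {g \<in> X. isGh g \<and> hvtx G H g \<in> S}"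

lemma flip_gens_D: "g \<in> flip_gens \<Longrightarrow> g \<in> X \<and> isGh g \<and> hvtx G H g \<in> S \<and> hvtx G H g \<in> V4 V G"
  using S_V4 by (auto simp: flip_gens_def)

lemma twin_flip_gens: assumes "g \<in> flip_gens" shows "twin G H g \<in> flip_gens"
  using twin[of g] flip_gens_D[OF assms] unfolding flip_gens_def by simp

lemma card_flip_gens: "card flip_gens = 2 * card S"
proof -
  have "finite S" using S_V4 finite_V by (auto simp: V4_def intro: finite_subset)
  have "flip_gens = (\<Union>v\<in>S. {h \<in> X. isGh h \<and> hvtx G H h = v})"
    unfolding flip_gens_def by blast
  also have "card \<dots> = (\<Sum>v\<in>S. card {h \<in> X. isGh h \<and> hvtx G H h = v})"
    using \<open>finite S\<close> M.finite_X by (intro card_UN_disjoint) auto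
  also have "\<dots> = (\<Sum>v\<in>S. 2)"
    using card_G_halves_at[of G H] V4_deg S_V4 by (intro sum.cong) auto
  finally show ?thesis by simp
qed

text \<open>\<open>M\<^sup>\<oplus>\<^sup>S = \<sigma> \<circ> M\<close>, where \<open>\<sigma>\<close> transposes \<open>g\<close> and \<open>M (twin g)\<close> for every \<open>G\<close>-half-edge \<open>g\<close> at a
  vertex of \<open>S\<close> (see \<open>transps_flip_pairs_M\<close>).\<close>

definition flip_pairs :: "(('a,'b) half \<times> ('a,'b) half) list" where
  "flip_pairs = map (\<lambda>g. (g, M (twin G H g))) (SOME gs. distinct gs \<and> set gs = flip_gens)"

lemma flip_pairs_mem: "(a, b) \<in> set flip_pairs \<longleftrightarrow> a \<in> flip_gens \<and> b = M (twin G H a)"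
  and length_flip_pairs: "length flip_pairs = 2 * card S"
  and distinct_flip_pairs: "distinct (pair_elems flip_pairs)"
proof -
  have "finite flip_gens" using M.finite_X by (simp add: flip_gens_def)
  then obtain gs where gs: "distinct gs" "set gs = flip_gens" using finite_distinct_list by blast
  let ?gs = "SOME gs. distinct gs \<and> set gs = flip_gens"
  have gs': "distinct ?gs" "set ?gs = flip_gens" using someI[of "\<lambda>gs. distinct gs \<and> set gs = flip_gens"] gs
    by blast+
  show "(a, b) \<in> set flip_pairs \<longleftrightarrow> a \<in> flip_gens \<and> b = M (twin G H a)"
    unfolding flip_pairs_def using gs' by auto
  show "length flip_pairs = 2 * card S"
    unfolding flip_pairs_def using distinct_card[OF gs'(1)] gs'(2) card_flip_gens by simp
  show "distinct (pair_elems flip_pairs)"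
    unfolding flip_pairs_def
  proof (rule distinct_pair_elems_map[OF gs'(1)])
    show "inj_on (\<lambda>g. M (twin G H g)) (set ?gs)"
      using twin_twin flip_gens_D gs'(2) by (intro inj_onI) (metis M_M)
    show "\<forall>x\<in>set ?gs. \<forall>y\<in>set ?gs. x \<noteq> M (twin G H y)"
      using flip_gens_D twin_flip_gens M_kind gs'(2) by metis
  qed
qed

lemma pair_elems_flip_pairs:
  assumes "x \<in> set (pair_elems flip_pairs)" shows "x \<in> X \<and> hvtx G H x \<in> S"
proof -
  obtain a b where ab: "(a, b) \<in> set flip_pairs" "x = a \<or> x = b"
    using assms by (auto simp: pair_elems_def)
  then have a: "a \<in> flip_gens" and b: "b = M (twin G H a)" using flip_pairs_mem by auto
  have t: "twin G H a \<in> X" "hvtx G H (twin G H a) \<in> S"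
    using flip_gens_D[OF twin_flip_gens[OF a]] by auto
  then show ?thesis using ab(2) flip_gens_D[OF a] b M_in[OF t(1)] M_vtx[OF t(1)] by auto
qed

lemma transps_flip_pairs_M: "transps flip_pairs (M z) = flipS G H M S z"
proof (cases "z \<in> X \<and> hvtx G H z \<in> S")
  case False
  then have "M z \<notin> set (pair_elems flip_pairs)"
    using pair_elems_flip_pairs M_in M_vtx M_M by metis
  then show ?thesis unfolding flipS_twin if_not_P[OF False] by (rule transps_other)
next
  case True
  then have z: "z \<in> X" "hvtx G H z \<in> S" "hvtx G H z \<in> V4 V G" using S_V4 by auto
  show ?thesis
  proof (cases "isGh z")
    case True
    then have "twin G H z \<in> flip_gens" using twin_flip_gens z by (simp add: flip_gens_def)
    then have "(twin G H z, M z) \<in> set flip_pairs" using flip_pairs_mem twin_twin[OF z(1,3)] by simp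
    then show ?thesis using transps_pair[OF distinct_flip_pairs] z by (simp add: flipS_twin)
  next
    case False
    then have "M z \<in> flip_gens" using z M_in M_vtx M_kind by (auto simp: flip_gens_def)
    then have "(M z, twin G H z) \<in> set flip_pairs"
      using flip_pairs_mem twin_M[OF M_in[OF z(1)]] M_vtx[OF z(1)] z by simp
    then show ?thesis using transps_pair[OF distinct_flip_pairs] z by (simp add: flipS_twin)
  qed
qed

lemma Tstep_flipS: "Tstep (flipS G H M S) = transps flip_pairs \<circ> T"
  by (rule ext) (simp add: Tstep_def transps_flip_pairs_M)

lemma cycles_flipS:
  "cycles G H (flipS G H M S) \<le> cycles G H M + card S \<and>
   (cycles G H (flipS G H M S) = cycles G H M + card S \<longleftrightarrow> noncrossing_pairs X T flip_pairs)"
proof -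
  have "2 * cycles G H (flipS G H M S) = orbit_count X (transps flip_pairs \<circ> T)"
    using half_involution.double_cycles[OF half_involution_flipS] Tstep_flipS by simp
  moreover have "2 * cycles G H M = orbit_count X T" by (rule M.double_cycles)
  moreover have "set (pair_elems flip_pairs) \<subseteq> X" using pair_elems_flip_pairs by blast
  ultimately show ?thesis
    using orbit_count_transps[OF M.T.finite_perm_axioms distinct_flip_pairs] length_flip_pairs by auto
qed

end

section \<open>Double visits, induced matchings and crossings\<close>

context pm_flip
begin

lemma reaches_hflip_M: "h \<in> X \<Longrightarrow> reaches X T (hflip (M h)) h"
  using M.reaches_hflip_N[OF M_in] by simp

lemma reaches_M_twin:
  assumes g: "g \<in> X" "hvtx G H g \<in> V4 V G" and c: "reaches X T (twin G H g) (M g)"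
  shows "reaches X T g (M (twin G H g))"
proof -
  have "reaches X T g (hflip (M g))" using M.T.reaches_sym[OF reaches_hflip_M[OF g(1)]] .
  moreover have "reaches X T (hflip (M g)) (hflip (twin G H g))" using M.reaches_reverse[OF c] .
  moreover have "reaches X T (hflip (twin G H g)) (M (twin G H g))"
    using M.reaches_hflip_N[OF twin(1)[OF g]] .
  ultimately show ?thesis using M.T.reaches_trans by blast
qed

lemma reaches_M_imp_not_reaches:
  assumes c: "reaches X T g (M g')" and g': "g' \<in> X" shows "\<not> reaches X T g g'"
proof
  assume "reaches X T g g'"
  then have "reaches X T g' (M g')" using c M.T.reaches_commute by blast
  then show False using M.not_reaches_N[OF g'] by blast
qed

lemma at_vertex_on_orbit:
  assumes g: "g \<in> X" "isGh g" "hvtx G H g \<in> V4 V G" and c: "reaches X T g (M (twin G H g))"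
    and y: "y \<in> X" "hvtx G H y = hvtx G H g" "reaches X T g y"
  shows "y = g \<or> y = M (twin G H g)"
proof -
  have "y \<noteq> twin G H g" using reaches_M_imp_not_reaches[OF c twin(1)[OF g(1,3)]] y(3) by blast
  moreover have "y \<noteq> M g" using M.not_reaches_N[OF g(1)] y(3) by blast
  ultimately show ?thesis using halves_at_vertex[OF g y(1,2)] by blast
qed

definition return_time :: "('a,'b) half \<Rightarrow> nat" where
  "return_time h = (LEAST k. hvtx G H (hflip ((T ^^ k) h)) = hvtx G H h)"

lemma induced_return_time: "induced G H M (hvtx G H h) h = hflip ((T ^^ return_time h) h)"
  unfolding induced_def return_time_def ..

lemma hvtx_hflip_funpow: "h \<in> X \<Longrightarrow> hvtx G H (hflip ((T ^^ k) h)) = hvtx G H ((T ^^ Suc k) h)"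
  using M_vtx[OF hflip_in[OF M.T.funpow_in]] T_apply[of "(T ^^ k) h"] by simp

lemma hvtx_return_time:
  assumes h: "h \<in> X" shows "hvtx G H ((T ^^ Suc (return_time h)) h) = hvtx G H h"
proof -
  have "Suc (period T h - 1) = period T h" using M.T.period_pos[OF h] by simp
  then have "hvtx G H (hflip ((T ^^ (period T h - 1)) h)) = hvtx G H h"
    using hvtx_hflip_funpow[OF h, of "period T h - 1"] M.T.funpow_period[OF h] by metis
  then have "hvtx G H (hflip ((T ^^ return_time h) h)) = hvtx G H h"
    unfolding return_time_def by (rule LeastI)
  then show ?thesis using hvtx_hflip_funpow[OF h] by simp
qed

lemma return_time_le:
  assumes h: "h \<in> X" and j: "0 < j" "hvtx G H ((T ^^ j) h) = hvtx G H h"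
  shows "Suc (return_time h) \<le> j"
proof -
  have "hvtx G H (hflip ((T ^^ (j - 1)) h)) = hvtx G H h"
    using hvtx_hflip_funpow[OF h, of "j - 1"] j by simp
  then have "return_time h \<le> j - 1" unfolding return_time_def by (rule Least_le)
  then show ?thesis using j by simp
qed

lemma induced_G_imp_reaches:
  assumes h: "h \<in> X" "isGh h" "hvtx G H h \<in> V4 V G" and ind: "isGh (induced G H M (hvtx G H h) h)"
  shows "reaches X T h (M (twin G H h))"
proof -
  let ?z = "hflip ((T ^^ return_time h) h)"
  have z: "?z \<in> X" "isGh ?z"
    using hflip_in[OF M.T.funpow_in[OF h(1)]] ind induced_return_time[of h] by auto
  have "M ?z = (T ^^ Suc (return_time h)) h" using T_apply[of "(T ^^ return_time h) h"] by simp
  then have Mz: "hvtx G H (M ?z) = hvtx G H h" "reaches X T h (M ?z)"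
    using hvtx_return_time[OF h(1)] M.T.reaches_funpow[OF h(1), of "Suc (return_time h)"] by auto
  have "M ?z = h \<or> M ?z = twin G H h \<or> M ?z = M h \<or> M ?z = M (twin G H h)"
    using halves_at_vertex[OF h M_in[OF z(1)] Mz(1)] .
  moreover have "\<not> isGh (M ?z)" using M_kind[OF z(1)] z(2) by simp
  then have "M ?z \<noteq> h" "M ?z \<noteq> twin G H h" using h(2) twin(4)[OF h(1,3)] by auto
  moreover have "M ?z \<noteq> M h" using Mz(2) M.not_reaches_N[OF h(1)] by auto
  ultimately show ?thesis using Mz(2) by auto
qed

lemma gg_imp_reaches:
  assumes g: "g \<in> X" "isGh g" "hvtx G H g \<in> V4 V G" and gg: "hvtx G H g \<in> gg V G H M"
  shows "reaches X T g (M (twin G H g))"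
proof -
  note tw = twin[OF g(1,3)]
  obtain h where h: "h \<in> X" "hvtx G H h = hvtx G H g" "isGh h" "isGh (induced G H M (hvtx G H h) h)"
    using gg unfolding gg_def by auto
  have "h = g \<or> h = twin G H g"
    using halves_at_vertex[OF g h(1,2)] h(3) M_kind[OF g(1)] M_kind[OF tw(1)] g(2) tw(4) by auto
  then show ?thesis
  proof
    assume "h = twin G H g"
    then have "reaches X T (twin G H g) (M g)"
      using induced_G_imp_reaches[OF h(1,3)] h g(3) twin_twin[OF g(1,3)] by simp
    then show ?thesis using reaches_M_twin[OF g(1,3)] by blast
  qed (use induced_G_imp_reaches[OF g] h in simp)
qed

lemma reaches_imp_visits_twice:
  assumes g: "g \<in> X" "isGh g" "hvtx G H g \<in> V4 V G" and c: "reaches X T g (M (twin G H g))"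
  shows "visits_twice G H M (hvtx G H g)"
proof -
  have g_Mtw: "(g, M (twin G H g)) \<in> conn G H M" using M.reaches_conn[OF c] .
  moreover have "(g, twin G H g) \<in> conn G H M"
    using M.conn_trans[OF g_Mtw M.conn_sym[OF M.conn_N[OF twin(1)[OF g(1,3)]]]] by simp
  moreover have "(g, M g) \<in> conn G H M" using M.conn_N[OF g(1)] .
  ultimately have "(g, h) \<in> conn G H M" if "h \<in> X" "hvtx G H h = hvtx G H g" for h
    using halves_at_vertex[OF g that] M.conn_refl by blast
  then show ?thesis unfolding visits_twice_def using M.conn_sym M.conn_trans by metis
qed

lemma reaches_imp_induced_twin:
  assumes g: "g \<in> X" "isGh g" "hvtx G H g \<in> V4 V G" and c: "reaches X T g (M (twin G H g))"
  shows "induced G H M (hvtx G H g) g = twin G H g"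
proof -
  let ?j = "orbit_dist T g (M (twin G H g))" and ?y = "(T ^^ Suc (return_time g)) g"
  note tw = twin[OF g(1,3)]
  have j: "(T ^^ ?j) g = M (twin G H g)" "?j < period T g"
    using M.T.funpow_orbit_dist[OF c] M.T.orbit_dist_less_period[OF c] by auto
  have "M (twin G H g) \<noteq> g" using M_kind[OF tw(1)] tw(4) g(2) by auto
  then have "0 < ?j" using M.T.orbit_dist_pos[OF c] by simp
  moreover have "hvtx G H ((T ^^ ?j) g) = hvtx G H g" using j(1) M_vtx[OF tw(1)] tw(2) by simp
  ultimately have "Suc (return_time g) \<le> ?j" using return_time_le[OF g(1)] by blast
  then have "?y \<noteq> g" using M.T.funpow_neq_below_period[of "Suc (return_time g)" g] j(2) by simp
  then have "?y = M (twin G H g)"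
    using at_vertex_on_orbit[OF g c M.T.funpow_in[OF g(1)] hvtx_return_time[OF g(1)]
        M.T.reaches_funpow[OF g(1)]] by simp
  then have "M (hflip ((T ^^ return_time g) g)) = M (twin G H g)"
    using T_apply[of "(T ^^ return_time g) g"] by simp
  then show ?thesis using induced_return_time by (metis M_M)
qed

lemma gg_iff_reaches:
  assumes g: "g \<in> X" "isGh g" "hvtx G H g \<in> V4 V G"
  shows "hvtx G H g \<in> gg V G H M \<longleftrightarrow> reaches X T g (M (twin G H g))"
proof
  assume "reaches X T g (M (twin G H g))"
  then show "hvtx G H g \<in> gg V G H M"
    using reaches_imp_visits_twice[OF g] reaches_imp_induced_twin[OF g] twin(4)[OF g(1,3)] g
    unfolding gg_def by auto
qed (rule gg_imp_reaches[OF g])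

lemma flip_gen_at: assumes "v \<in> S" obtains g where "g \<in> flip_gens" "hvtx G H g = v"
proof -
  have "card {h \<in> X. isGh h \<and> hvtx G H h = v} = 2"
    using card_G_halves_at[of G H v] V4_deg assms S_V4 by auto
  then have "{h \<in> X. isGh h \<and> hvtx G H h = v} \<noteq> {}" by (metis card.empty zero_neq_numeral)
  then obtain g where "g \<in> X" "isGh g" "hvtx G H g = v" by blast
  then show ?thesis using that assms by (simp add: flip_gens_def)
qed

lemma passage_at_gg_vertex:
  assumes u: "u \<in> S" "u \<in> gg V G H M" and x: "x \<in> X" "hvtx G H x = u"
  obtains g where "g \<in> flip_gens" "hvtx G H g = u" "x = g \<or> x = M (twin G H g)"
    "\<And>y. y \<in> X \<Longrightarrow> hvtx G H y = u \<Longrightarrow> reaches X T x y \<Longrightarrow> y = g \<or> y = M (twin G H g)"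
proof -
  have closed: "y = g \<or> y = M (twin G H g)"
    if g: "g \<in> flip_gens" "hvtx G H g = u" and xg: "x = g \<or> x = M (twin G H g)"
      and y: "y \<in> X" "hvtx G H y = u" "reaches X T x y" for g y
  proof -
    have gp: "g \<in> X" "isGh g" "hvtx G H g \<in> V4 V G" using flip_gens_D[OF g(1)] by auto
    have c: "reaches X T g (M (twin G H g))" using gg_iff_reaches[OF gp] u(2) g(2) by simp
    have "reaches X T g x" using xg c M.T.reaches_refl[OF gp(1)] by blast
    then have "reaches X T g y" using y(3) M.T.reaches_trans by blast
    then show ?thesis using at_vertex_on_orbit[OF gp c y(1)] y(2) g(2) by simp
  qed
  obtain g0 where g0: "g0 \<in> flip_gens" "hvtx G H g0 = u" using flip_gen_at[OF u(1)] by blast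
  have g0p: "g0 \<in> X" "isGh g0" "hvtx G H g0 \<in> V4 V G" using flip_gens_D[OF g0(1)] by auto
  have tw0: "twin G H g0 \<in> flip_gens" "hvtx G H (twin G H g0) = u" "twin G H (twin G H g0) = g0"
    using twin_flip_gens[OF g0(1)] twin(2)[OF g0p(1,3)] g0(2) twin_twin[OF g0p(1,3)] by auto
  have "x = g0 \<or> x = twin G H g0 \<or> x = M g0 \<or> x = M (twin G H g0)"
    using halves_at_vertex[OF g0p x(1)] x(2) g0(2) by simp
  then consider "x = g0 \<or> x = M (twin G H g0)" | "x = twin G H g0 \<or> x = M (twin G H (twin G H g0))"
    using tw0(3) by auto
  then show ?thesis
  proof cases
    case 1
    show ?thesis by (rule that[OF g0 1 closed[OF g0 1]])
  next
    case 2
    show ?thesis by (rule that[OF tw0(1,2) 2 closed[OF tw0(1,2) 2]])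
  qed
qed

lemma crosses_chords_of_passages:
  assumes "crosses G H M u w"
  obtains x y z z' where "x \<in> X" "hvtx G H x = u" "hvtx G H y = u" "y \<noteq> x"
    "hvtx G H z = w" "hvtx G H z' = w" "z \<noteq> z'" "chords_cross X T x y z z'"
proof -
  obtain x k1 k2 k3 where x: "x \<in> X" "hvtx G H x = u" and ks: "0 < k1" "k1 < k2" "k2 < k3"
    and v1: "hvtx G H ((T ^^ k1) x) = w" and v2: "hvtx G H ((T ^^ k2) x) = u"
    and v3: "hvtx G H ((T ^^ k3) x) = w" and nr: "\<forall>j. 0 < j \<and> j \<le> k3 \<longrightarrow> (T ^^ j) x \<noteq> x"
    using assms unfolding crosses_def by blast
  have k3: "k3 < period T x"
  proof (rule ccontr)
    assume "\<not> k3 < period T x"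
    then show False using nr M.T.period_pos[OF x(1)] M.T.funpow_period[OF x(1)] by auto
  qed
  have "orbit_dist T x ((T ^^ k1) x) = k1" "orbit_dist T x ((T ^^ k2) x) = k2"
    "orbit_dist T x ((T ^^ k3) x) = k3"
    using M.T.orbit_dist_unique[OF x(1)] ks k3 by auto
  then have "chords_cross X T x ((T ^^ k2) x) ((T ^^ k1) x) ((T ^^ k3) x)"
    unfolding chords_cross_def using M.T.reaches_funpow[OF x(1)] ks by simp
  moreover have "(T ^^ k2) x \<noteq> x" using M.T.funpow_neq_below_period ks k3 by simp
  moreover have "(T ^^ k1) x \<noteq> (T ^^ k3) x"
    using M.T.funpow_inj_below_period[OF x(1), of k1 k3] ks k3 by auto
  ultimately show ?thesis using that x v1 v2 v3 by blast
qed

lemma crosses_imp_chords_cross: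
  assumes u: "u \<in> S" "u \<in> gg V G H M" and w: "w \<in> S" "w \<in> gg V G H M"
    and "crosses G H M u w"
  obtains g1 g2 where "g1 \<in> flip_gens" "g2 \<in> flip_gens" "hvtx G H g1 = u" "hvtx G H g2 = w"
    "chords_cross X T g1 (M (twin G H g1)) g2 (M (twin G H g2))"
proof -
  obtain x y z z' where x: "x \<in> X" "hvtx G H x = u" and y: "hvtx G H y = u" "y \<noteq> x"
    and z: "hvtx G H z = w" "hvtx G H z' = w" "z \<noteq> z'" and cr: "chords_cross X T x y z z'"
    using crosses_chords_of_passages[OF assms(5)] by blast
  have reach: "reaches X T x y" "reaches X T x z" "reaches X T x z'"
    using cr unfolding chords_cross_def by auto
  obtain g1 where g1: "g1 \<in> flip_gens" "hvtx G H g1 = u" "x = g1 \<or> x = M (twin G H g1)"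
    and cl1: "\<And>y. y \<in> X \<Longrightarrow> hvtx G H y = u \<Longrightarrow> reaches X T x y \<Longrightarrow> y = g1 \<or> y = M (twin G H g1)"
    using passage_at_gg_vertex[OF u x] by blast
  have zX: "z \<in> X" using M.T.reaches_in[OF reach(2)] by simp
  obtain g2 where g2: "g2 \<in> flip_gens" "hvtx G H g2 = w" "z = g2 \<or> z = M (twin G H g2)"
    and cl2: "\<And>y. y \<in> X \<Longrightarrow> hvtx G H y = w \<Longrightarrow> reaches X T z y \<Longrightarrow> y = g2 \<or> y = M (twin G H g2)"
    using passage_at_gg_vertex[OF w zX z(1)] by blast
  have y_cases: "y = g1 \<or> y = M (twin G H g1)" using cl1 M.T.reaches_in[OF reach(1)] y(1) reach(1) by blast
  have z'_cases: "z' = g2 \<or> z' = M (twin G H g2)"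
    using cl2 M.T.reaches_in[OF reach(3)] z(2) M.T.reaches_commute[OF reach(2)] reach(3) by blast
  have cr1: "chords_cross X T g1 (M (twin G H g1)) z z'"
  proof (cases "x = g1")
    case True
    then have "y = M (twin G H g1)" using y_cases y(2) by auto
    then show ?thesis using cr True by simp
  next
    case False
    then have "x = M (twin G H g1)" "y = g1" using g1(3) y_cases y(2) by auto
    moreover have "orbit_split X T x y"
      unfolding orbit_split_def orbit_split_axioms_def
      using M.T.finite_perm_axioms reach(1) y(2) by auto
    ultimately show ?thesis using cr orbit_split.chords_cross_swap_first[of X T x y z z'] by simp
  qed
  have "chords_cross X T g1 (M (twin G H g1)) g2 (M (twin G H g2))"
  proof (cases "z = g2")
    case True
    then have "z' = M (twin G H g2)" using z'_cases z(3) by auto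
    then show ?thesis using cr1 True by simp
  next
    case False
    then have "z = M (twin G H g2)" "z' = g2" using g2(3) z'_cases z(3) by auto
    then show ?thesis using cr1 chords_cross_commute_right[of X T g1 "M (twin G H g1)" z z'] by simp
  qed
  then show ?thesis using that g1(1,2) g2(1,2) by blast
qed

lemma chords_cross_imp_crosses:
  assumes g1: "g1 \<in> flip_gens" "hvtx G H g1 = u" and g2: "g2 \<in> flip_gens" "hvtx G H g2 = w"
    and uw: "u \<noteq> w" and cr: "chords_cross X T g1 (M (twin G H g1)) g2 (M (twin G H g2))"
  shows "crosses G H M u w"
proof -
  let ?b1 = "M (twin G H g1)" and ?b2 = "M (twin G H g2)"
  let ?m = "orbit_dist T g1 ?b1" and ?c = "orbit_dist T g1 g2" and ?d = "orbit_dist T g1 ?b2"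
  have g1p: "g1 \<in> X" "hvtx G H g1 \<in> V4 V G" and g2p: "g2 \<in> X" "hvtx G H g2 \<in> V4 V G"
    using flip_gens_D g1(1) g2(1) by auto
  have b1: "hvtx G H ?b1 = u" using twin[OF g1p] M_vtx g1(2) by simp
  have b2: "hvtx G H ?b2 = w" using twin[OF g2p] M_vtx g2(2) by simp
  have reach: "reaches X T g1 ?b1" "reaches X T g1 g2" "reaches X T g1 ?b2"
    and sides: "(?c < ?m) \<noteq> (?d < ?m)"
    using cr unfolding chords_cross_def by auto
  have e: "(T ^^ ?m) g1 = ?b1" "(T ^^ ?c) g1 = g2" "(T ^^ ?d) g1 = ?b2"
    using M.T.funpow_orbit_dist reach by blast+
  have lt: "?m < period T g1" "?c < period T g1" "?d < period T g1"
    using M.T.orbit_dist_less_period reach by blast+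
  have "?m \<noteq> ?c" "?m \<noteq> ?d" using e b1 b2 g2(2) uw by metis+
  moreover have "0 < ?c" "0 < ?d" using M.T.orbit_dist_pos reach g1(2) g2(2) b2 uw by fastforce+
  ultimately have ks: "0 < min ?c ?d" "min ?c ?d < ?m" "?m < max ?c ?d" "max ?c ?d < period T g1"
    using sides lt by auto
  have "hvtx G H ((T ^^ min ?c ?d) g1) = w" "hvtx G H ((T ^^ max ?c ?d) g1) = w"
    using e(2,3) g2(2) b2 by (simp_all add: min_def max_def)
  moreover have "hvtx G H ((T ^^ ?m) g1) = u" using e(1) b1 by simp
  moreover have "\<forall>j. 0 < j \<and> j \<le> max ?c ?d \<longrightarrow> (T ^^ j) g1 \<noteq> g1"
  proof (intro allI impI)
    fix j assume "0 < j \<and> j \<le> max ?c ?d"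
    then show "(T ^^ j) g1 \<noteq> g1" using M.T.funpow_neq_below_period[of j g1] ks(4) by simp
  qed
  ultimately show ?thesis
    unfolding crosses_def using g1p(1) g1(2) ks by blast
qed

lemma flip_pairs_reach_iff:
  "(\<forall>a b. (a, b) \<in> set flip_pairs \<longrightarrow> reaches X T a b) \<longleftrightarrow> S \<subseteq> gg V G H M"
proof
  assume reach: "\<forall>a b. (a, b) \<in> set flip_pairs \<longrightarrow> reaches X T a b"
  show "S \<subseteq> gg V G H M"
  proof
    fix v assume "v \<in> S"
    then obtain g where g: "g \<in> flip_gens" "hvtx G H g = v" using flip_gen_at by blast
    then have "reaches X T g (M (twin G H g))" using reach flip_pairs_mem by blast
    then show "v \<in> gg V G H M" using gg_iff_reaches[of g] flip_gens_D[OF g(1)] g(2) by simp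
  qed
next
  assume gg: "S \<subseteq> gg V G H M"
  show "\<forall>a b. (a, b) \<in> set flip_pairs \<longrightarrow> reaches X T a b"
  proof (intro allI impI)
    fix a b assume "(a, b) \<in> set flip_pairs"
    then have a: "a \<in> flip_gens" "b = M (twin G H a)" using flip_pairs_mem by auto
    then show "reaches X T a b" using gg_iff_reaches[of a] flip_gens_D[OF a(1)] gg by auto
  qed
qed

lemma flip_pairs_cross_imp_crosses:
  assumes gg: "S \<subseteq> gg V G H M"
    and ab: "(a, b) \<in> set flip_pairs" and cd: "(c, d) \<in> set flip_pairs" and ne: "(a, b) \<noteq> (c, d)"
    and cr: "chords_cross X T a b c d"
  shows "hvtx G H a \<noteq> hvtx G H c \<and> crosses G H M (hvtx G H a) (hvtx G H c)"
proof -
  have a: "a \<in> flip_gens" "b = M (twin G H a)" and c: "c \<in> flip_gens" "d = M (twin G H c)"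
    using flip_pairs_mem ab cd by auto
  have ap: "a \<in> X" "isGh a" "hvtx G H a \<in> S" "hvtx G H a \<in> V4 V G"
    and cp: "c \<in> X" "isGh c" "hvtx G H c \<in> V4 V G"
    using flip_gens_D a(1) c(1) by auto
  have "hvtx G H a \<noteq> hvtx G H c"
  proof
    assume "hvtx G H a = hvtx G H c"
    then have "c = twin G H a" using twin_unique[OF ap(1,4) cp(1)] ne a c ap(2) cp(2) by auto
    moreover have "reaches X T a (M (twin G H a))" using gg_iff_reaches[OF ap(1,2,4)] gg ap(3) by auto
    ultimately have "\<not> reaches X T a c" using reaches_M_imp_not_reaches twin(1)[OF ap(1,4)] by blast
    then show False using cr unfolding chords_cross_def by blast
  qed
  then show ?thesis using chords_cross_imp_crosses[OF a(1) refl c(1) refl] cr a(2) c(2) by blast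
qed

lemma flip_pairs_noncrossing_iff:
  assumes gg: "S \<subseteq> gg V G H M"
  shows "(\<forall>a b c d. (a, b) \<in> set flip_pairs \<longrightarrow> (c, d) \<in> set flip_pairs \<longrightarrow> (a, b) \<noteq> (c, d) \<longrightarrow>
      \<not> chords_cross X T a b c d) \<longleftrightarrow> non_crossing G H M S"
proof
  assume nc: "\<forall>a b c d. (a, b) \<in> set flip_pairs \<longrightarrow> (c, d) \<in> set flip_pairs \<longrightarrow> (a, b) \<noteq> (c, d) \<longrightarrow>
      \<not> chords_cross X T a b c d"
  show "non_crossing G H M S" unfolding non_crossing_def
  proof (intro ballI impI notI)
    fix u w assume u: "u \<in> S" and w: "w \<in> S" and "u \<noteq> w" and "crosses G H M u w"
    then obtain g1 g2 where g: "g1 \<in> flip_gens" "g2 \<in> flip_gens" "hvtx G H g1 = u" "hvtx G H g2 = w"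
      and "chords_cross X T g1 (M (twin G H g1)) g2 (M (twin G H g2))"
      using crosses_imp_chords_cross gg by blast
    moreover have "(g1, M (twin G H g1)) \<noteq> (g2, M (twin G H g2))" using g \<open>u \<noteq> w\<close> by auto
    ultimately show False using nc flip_pairs_mem by blast
  qed
next
  assume "non_crossing G H M S"
  then show "\<forall>a b c d. (a, b) \<in> set flip_pairs \<longrightarrow> (c, d) \<in> set flip_pairs \<longrightarrow> (a, b) \<noteq> (c, d) \<longrightarrow>
      \<not> chords_cross X T a b c d"
    using flip_pairs_cross_imp_crosses[OF gg] flip_pairs_mem flip_gens_D
    unfolding non_crossing_def by metis
qed

lemma noncrossing_flip_pairs_iff:
  "noncrossing_pairs X T flip_pairs \<longleftrightarrow> S \<subseteq> gg V G H M \<and> non_crossing G H M S"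
  using flip_pairs_reach_iff flip_pairs_noncrossing_iff unfolding noncrossing_pairs_def by blast

end

theorem mainTheorem13:
  fixes V :: "'v set" and G :: "('v,'a) mgraph" and H :: "('v,'b) mgraph"
    and M :: "('a,'b) half \<Rightarrow> ('a,'b) half" and S :: "'v set"
  assumes "finite V"
    and "multigraph_on V G" and "multigraph_on V H"
    and "loopless G" and "loopless H"
    and "\<forall>v\<in>V. deg G v = deg H v \<and> deg G v \<le> 2"
    and "M \<in> PM G H"
    and "S \<subseteq> V4 V G"
  shows "cycles G H (flipS G H M S) \<le> cycles G H M + card S
    \<and> (cycles G H (flipS G H M S) = cycles G H M + card S
         \<longleftrightarrow> S \<subseteq> gg V G H M \<and> non_crossing G H M S)"
proof -
  interpret pm_flip V G H M S
    using assms by unfold_locales auto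
  show ?thesis using cycles_flipS noncrossing_flip_pairs_iff by simp
qed

end
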